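(* Let $n\geq 2$, let $p$ be a prime, let $x$ be a point of Culler--Vogtmann outer space $CV_n$, let $N$ be a normal subgroup of $F_n$ of index $p$, and let $A\le\mathrm{Out}(F_n)$ be the (finite index) subgroup preserving $N$ and each of its cosets. Then the following three sets are finite and have the same cardinality: (a) the set of $A$-orbits of points in the $\mathrm{Out}(F_n)$-orbit of $x$; (b) the set of $\mathrm{Out}(F_n)_x$-orbits of pairs $(N',tN')$, where $N'$ is an index $p$ normal subgroup of $F_n$ and $tN'\neq N'$ is a coset of it; (c) the set of $\mathrm{Out}(F_n)_x$-orbits of non-trivial homomorphisms $F_n\to\mathbb{Z}/p$.
   Context: $\mathrm{Out}(F_n)$ acts on $CV_n$ on the right; $\mathrm{Out}(F_n)_x$ denotes the stabiliser of $x$. Since an index $p$ normal subgroup $N'$ has abelian quotient, inner automorphisms preserve $N'$ and each of its cosets, so $\mathrm{Out}(F_n)$ acts on such pairs $(N',tN')$ (via $\varphi\cdot(N',tN')=(\varphi^{-1}(N'),\varphi^{-1}(tN'))$) and on homomorphisms $F_n\to\mathbb{Z}/p$ by precomposition. *)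

theory Defs
  imports "HOL-Algebra.Algebra"
begin

type_synonym letter = "nat \<times> bool"
type_synonym word = "letter list"

definition flip :: "letter \<Rightarrow> letter" where
  "flip d = (fst d, \<not> snd d)"

fun reduced :: "word \<Rightarrow> bool" where
  "reduced [] = True"
| "reduced [a] = True"
| "reduced (a # b # w) = (b \<noteq> flip a \<and> reduced (b # w))"

definition red_cons :: "letter \<Rightarrow> word \<Rightarrow> word" where
  "red_cons a w = (case w of [] \<Rightarrow> [a] | b # w' \<Rightarrow> (if b = flip a then w' else a # w))"

definition reduce :: "word \<Rightarrow> word" where
  "reduce w = foldr red_cons w []"

definition free_group :: "nat \<Rightarrow> word monoid" where
  "free_group n = \<lparr>carrier = {w. reduced w \<and> (\<forall>d\<in>set w. fst d < n)},
                   monoid.mult = (\<lambda>u v. reduce (u @ v)), one = []\<rparr>"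

definition Aut :: "nat \<Rightarrow> (word \<Rightarrow> word) set" where
  "Aut n = iso (free_group n) (free_group n)"

definition out_class :: "nat \<Rightarrow> (word \<Rightarrow> word) \<Rightarrow> (word \<Rightarrow> word) set" where
  "out_class n \<Phi> = {\<Psi> \<in> Aut n. \<exists>g\<in>carrier (free_group n). \<forall>w\<in>carrier (free_group n).
      \<Psi> w = g \<otimes>\<^bsub>free_group n\<^esub> \<Phi> w \<otimes>\<^bsub>free_group n\<^esub> inv\<^bsub>free_group n\<^esub> g}"

definition Out :: "nat \<Rightarrow> (word \<Rightarrow> word) set set" where
  "Out n = out_class n ` Aut n"

definition out_rep :: "(word \<Rightarrow> word) set \<Rightarrow> (word \<Rightarrow> word)" where
  "out_rep \<phi> = (SOME \<Phi>. \<Phi> \<in> \<phi>)"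

text \<open>Geometric edges are natural numbers e \<in> E; the oriented edges are (e,True), (e,False),
  with reversal flip. src gives the origin vertex of an oriented edge.\<close>

fun is_path :: "nat set \<Rightarrow> (letter \<Rightarrow> nat) \<Rightarrow> nat \<Rightarrow> word \<Rightarrow> nat \<Rightarrow> bool" where
  "is_path E src u [] v = (u = v)"
| "is_path E src u (d # ds) v = (fst d \<in> E \<and> src d = u \<and> is_path E src (src (flip d)) ds v)"

definition pi1 :: "nat set \<Rightarrow> (letter \<Rightarrow> nat) \<Rightarrow> nat \<Rightarrow> word monoid" where
  "pi1 E src v0 = \<lparr>carrier = {ds. is_path E src v0 ds v0 \<and> reduced ds},
                   monoid.mult = (\<lambda>a b. reduce (a @ b)), one = []\<rparr>"

definition metric_graph :: "nat set \<Rightarrow> nat set \<Rightarrow> (letter \<Rightarrow> nat) \<Rightarrow> (nat \<Rightarrow> real) \<Rightarrow> bool" where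
  "metric_graph V E src len \<longleftrightarrow>
     finite V \<and> V \<noteq> {} \<and> finite E \<and>
     (\<forall>e\<in>E. \<forall>b. src (e, b) \<in> V) \<and>
     (\<forall>u\<in>V. \<forall>v\<in>V. \<exists>ds. is_path E src u ds v) \<and>
     (\<forall>v\<in>V. card {d. fst d \<in> E \<and> src d = v} \<ge> 3) \<and>
     (\<forall>e\<in>E. len e > 0) \<and> sum len E = 1"

text \<open>A marked metric graph: (V, E, src, len, base vertex, marking F_n \<cong> pi_1(G, base)).\<close>
type_synonym mgraph = "nat set \<times> nat set \<times> (letter \<Rightarrow> nat) \<times> (nat \<Rightarrow> real) \<times> nat \<times> (word \<Rightarrow> word)"

definition valid_mgraph :: "nat \<Rightarrow> mgraph \<Rightarrow> bool" where
  "valid_mgraph n g = (case g of (V, E, src, len, v0, m) \<Rightarrow>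
     metric_graph V E src len \<and> v0 \<in> V \<and> m \<in> iso (free_group n) (pi1 E src v0))"

text \<open>Equivalence: an isometry h : G \<rightarrow> G' such that h \<circ> f is (freely) homotopic to f',
  i.e. h_* \<circ> m and m' agree up to change of base point along an edge path \<gamma>.\<close>
definition mg_equiv :: "nat \<Rightarrow> mgraph \<Rightarrow> mgraph \<Rightarrow> bool" where
  "mg_equiv n g g' = (case g of (V, E, src, len, v0, m) \<Rightarrow> case g' of (V', E', src', len', v0', m') \<Rightarrow>
     valid_mgraph n g \<and> valid_mgraph n g' \<and>
     (\<exists>hv hd \<gamma>. bij_betw hv V V' \<and> bij_betw hd (E \<times> UNIV) (E' \<times> UNIV) \<and>
        (\<forall>d\<in>E \<times> UNIV. hd (flip d) = flip (hd d) \<and> src' (hd d) = hv (src d)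
                         \<and> len' (fst (hd d)) = len (fst d)) \<and>
        is_path E' src' (hv v0) \<gamma> v0' \<and>
        (\<forall>w\<in>carrier (free_group n).
           m' w = reduce (map flip (rev \<gamma>) @ map hd (m w) @ \<gamma>))))"

definition mg_class :: "nat \<Rightarrow> mgraph \<Rightarrow> mgraph set" where
  "mg_class n g = {g'. mg_equiv n g g'}"

definition CV :: "nat \<Rightarrow> mgraph set set" where
  "CV n = mg_class n ` {g. valid_mgraph n g}"

definition precomp :: "mgraph \<Rightarrow> (word \<Rightarrow> word) \<Rightarrow> mgraph" where
  "precomp g \<Phi> = (case g of (V, E, src, len, v0, m) \<Rightarrow> (V, E, src, len, v0, m \<circ> \<Phi>))"

definition cv_act :: "nat \<Rightarrow> mgraph set \<Rightarrow> (word \<Rightarrow> word) set \<Rightarrow> mgraph set" where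
  "cv_act n x \<phi> = {g'. \<exists>g\<in>x. \<exists>\<Phi>\<in>\<phi>. mg_equiv n (precomp g \<Phi>) g'}"

definition stab :: "nat \<Rightarrow> mgraph set \<Rightarrow> (word \<Rightarrow> word) set set" where
  "stab n x = {\<phi> \<in> Out n. cv_act n x \<phi> = x}"

definition index_p_pairs :: "nat \<Rightarrow> nat \<Rightarrow> (word set \<times> word set) set" where
  "index_p_pairs n p = {(N', C). N' \<lhd> free_group n \<and> card (rcosets\<^bsub>free_group n\<^esub> N') = p \<and>
       C \<in> rcosets\<^bsub>free_group n\<^esub> N' \<and> C \<noteq> N'}"

definition pair_act :: "nat \<Rightarrow> (word \<Rightarrow> word) set \<Rightarrow> word set \<times> word set \<Rightarrow> word set \<times> word set" where
  "pair_act n \<phi> P = (let \<Phi> = out_rep \<phi> in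
     ({w \<in> carrier (free_group n). \<Phi> w \<in> fst P}, {w \<in> carrier (free_group n). \<Phi> w \<in> snd P}))"

definition nontriv_homs :: "nat \<Rightarrow> nat \<Rightarrow> (word \<Rightarrow> int) set" where
  "nontriv_homs n p = {f \<in> hom (free_group n) (integer_mod_group p).
       f \<in> extensional (carrier (free_group n)) \<and> (\<exists>w\<in>carrier (free_group n). f w \<noteq> 0)}"

definition hom_act :: "nat \<Rightarrow> (word \<Rightarrow> word) set \<Rightarrow> (word \<Rightarrow> int) \<Rightarrow> (word \<Rightarrow> int)" where
  "hom_act n \<phi> f = restrict (f \<circ> out_rep \<phi>) (carrier (free_group n))"

definition coset_stab :: "nat \<Rightarrow> word set \<Rightarrow> (word \<Rightarrow> word) set set" where
  "coset_stab n N = {\<phi> \<in> Out n. \<forall>\<Phi>\<in>\<phi>. \<Phi> ` N = N \<and>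
      (\<forall>t\<in>carrier (free_group n). \<Phi> ` (t <#\<^bsub>free_group n\<^esub> N) = t <#\<^bsub>free_group n\<^esub> N)}"

end

theory Submission
  imports Defs
begin

text \<open>
  All three sets are orbit sets of \<open>Aut(F\<^sub>n)\<close>, which acts through \<open>Out(F\<^sub>n)\<close>.
  A nontrivial homomorphism \<open>f : F\<^sub>n \<rightarrow> \<int>/p\<close> is the same thing as the pair
  \<open>(ker f, f\<^sup>-\<^sup>1(1))\<close>, equivariantly, which identifies (b) with (c).
  A homomorphism is a weight vector \<open>(f x\<^sub>1, \<dots>, f x\<^sub>n)\<close> over \<open>\<int>/p\<close>, and for \<open>n \<ge> 2\<close> the
  transvections \<open>x\<^sub>i \<mapsto> x\<^sub>i x\<^sub>j\<close> perform enough row operations to bring every nonzero vector to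
  \<open>(1, 0, \<dots>, 0)\<close>; so the nontrivial homomorphisms form a single orbit, that of any \<open>f\<^sub>0\<close> with
  kernel \<open>N\<close>, whose stabiliser is \<open>A\<close>. Hence (a) and (c) are the \<open>A\<close>-orbits on the orbit of
  \<open>x\<close> and the \<open>Out(F\<^sub>n)\<^sub>x\<close>-orbits on the orbit of \<open>f\<^sub>0\<close>; both are the double cosets
  \<open>Out(F\<^sub>n)\<^sub>x \<bs> Out(F\<^sub>n) / A\<close>. Finiteness follows from that of \<open>Hom(F\<^sub>n, \<int>/p)\<close>.
\<close>

abbreviation FG :: "nat \<Rightarrow> word monoid" where "FG n \<equiv> free_group n"
abbreviation ZP :: "nat \<Rightarrow> int monoid" where "ZP p \<equiv> integer_mod_group p"

section \<open>Free reduction of words\<close>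

definition inv_w :: "word \<Rightarrow> word" where
  "inv_w w = map flip (rev w)"

lemma flip_flip[simp]: "flip (flip a) = a"
  by (simp add: flip_def)

lemma fst_flip[simp]: "fst (flip a) = fst a"
  by (simp add: flip_def)

lemma flip_mem_Times: "d \<in> E \<times> UNIV \<Longrightarrow> flip d \<in> E \<times> UNIV"
  by (cases d) (simp add: flip_def)

lemma inv_w_inv_w[simp]: "inv_w (inv_w w) = w"
  by (simp add: inv_w_def rev_map comp_def)

lemma inv_w_append[simp]: "inv_w (u @ v) = inv_w v @ inv_w u"
  by (simp add: inv_w_def)

lemma inv_w_Nil[simp]: "inv_w [] = []"
  and inv_w_Cons[simp]: "inv_w (a # w) = inv_w w @ [flip a]"
  by (simp_all add: inv_w_def)

lemma set_inv_w: "set (inv_w w) = flip ` set w"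
  by (simp add: inv_w_def)

lemma map_inv_w:
  "(\<And>d. d \<in> set w \<Longrightarrow> h (flip d) = flip (h d)) \<Longrightarrow> map h (inv_w w) = inv_w (map h w)"
  by (induction w) auto

lemma reduced_Cons: "reduced (a # w) \<longleftrightarrow> reduced w \<and> (w = [] \<or> hd w \<noteq> flip a)"
  by (cases w) auto

lemma reduced_snoc: "reduced (u @ [b]) \<longleftrightarrow> reduced u \<and> (u = [] \<or> b \<noteq> flip (last u))"
proof (induction u)
  case (Cons a u)
  then show ?case by (cases u) (auto simp: reduced_Cons)
qed simp

lemma reduced_inv_w: "reduced w \<Longrightarrow> reduced (inv_w w)"
proof (induction w)
  case (Cons a w)
  then have r: "reduced w" "w = [] \<or> hd w \<noteq> flip a" by (auto simp: reduced_Cons)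
  have "inv_w w = [] \<or> flip a \<noteq> flip (last (inv_w w))"
  proof (cases "w = []")
    case False
    then have "last (inv_w w) = flip (hd w)" by (cases w) auto
    then show ?thesis using r False by auto
  qed simp
  then show ?case using Cons r unfolding inv_w_Cons reduced_snoc by blast
qed simp

lemma reduced_red_cons: "reduced w \<Longrightarrow> reduced (red_cons a w)"
  by (cases w) (auto simp: red_cons_def reduced_Cons)

lemma red_cons_reduced: "reduced (a # w) \<Longrightarrow> red_cons a w = a # w"
  by (cases w) (auto simp: red_cons_def)

lemma red_cons_cancel: "reduced z \<Longrightarrow> red_cons a (red_cons (flip a) z) = z"
proof (cases z)
  case (Cons b z')
  assume r: "reduced z"
  show ?thesis
  proof (cases "b = a")
    case True
    then show ?thesis using r Cons red_cons_reduced[of a z'] by (simp add: red_cons_def)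
  next
    case False
    then show ?thesis using Cons by (simp add: red_cons_def)
  qed
qed (simp add: red_cons_def)

lemma reduced_foldr: "reduced z \<Longrightarrow> reduced (foldr red_cons u z)"
  by (induction u) (auto intro: reduced_red_cons)

lemma reduced_reduce[simp]: "reduced (reduce w)"
  by (simp add: reduce_def reduced_foldr)

lemma reduce_Nil[simp]: "reduce [] = []"
  by (simp add: reduce_def)

lemma reduce_Cons: "reduce (a # w) = red_cons a (reduce w)"
  by (simp add: reduce_def)

lemma reduce_reduced: "reduced w \<Longrightarrow> reduce w = w"
  by (induction w) (auto simp: reduced_Cons reduce_Cons red_cons_reduced)

lemma reduce_reduce[simp]: "reduce (reduce w) = reduce w"
  by (simp add: reduce_reduced)

lemma reduce_append_foldr: "reduce (u @ v) = foldr red_cons u (reduce v)"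
  by (simp add: reduce_def)

lemma foldr_red_cons_red_cons:
  assumes "reduced z"
  shows "foldr red_cons (red_cons a w) z = red_cons a (foldr red_cons w z)"
proof (cases w)
  case (Cons b w')
  have "red_cons a (red_cons (flip a) (foldr red_cons w' z)) = foldr red_cons w' z"
    by (rule red_cons_cancel) (simp add: reduced_foldr assms)
  then show ?thesis using Cons by (auto simp: red_cons_def)
qed (simp add: red_cons_def)

lemma foldr_reduce: "reduced z \<Longrightarrow> foldr red_cons (reduce u) z = foldr red_cons u z"
  by (induction u) (simp_all add: reduce_Cons foldr_red_cons_red_cons)

lemma reduce_left[simp]: "reduce (reduce u @ v) = reduce (u @ v)"
  by (simp add: reduce_append_foldr foldr_reduce)

lemma reduce_right[simp]: "reduce (u @ reduce v) = reduce (u @ v)"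
  by (simp add: reduce_append_foldr)

lemma reduce_mid: "reduce (u @ reduce v @ w) = reduce (u @ v @ w)"
  by (metis reduce_right reduce_left append_assoc)

lemma foldr_inv_cancel: "reduced z \<Longrightarrow> foldr red_cons (u @ inv_w u) z = z"
  by (induction u arbitrary: z) (simp_all add: reduced_red_cons red_cons_cancel)

lemma reduce_cancel: "reduce (u @ inv_w u @ v) = reduce v"
  using foldr_inv_cancel[of "reduce v" u] by (simp add: reduce_append_foldr)

lemma reduce_cancel': "reduce (inv_w u @ u @ v) = reduce v"
  using reduce_cancel[of "inv_w u" v] by simp

lemma reduce_cancel_right: "reduce (u @ inv_w v @ v) = reduce u"
  by (metis reduce_right reduce_cancel' append_Nil2)

lemma reduce_cancel_Nil[simp]: "reduce (u @ inv_w u) = []" "reduce (inv_w u @ u) = []"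
  using reduce_cancel[of u "[]"] reduce_cancel'[of u "[]"] by simp_all

lemma set_reduce: "set (reduce w) \<subseteq> set w"
proof (induction w)
  case (Cons a w)
  have "set (red_cons a (reduce w)) \<subseteq> insert a (set (reduce w))"
    by (cases "reduce w") (auto simp: red_cons_def)
  then show ?case using Cons by (auto simp: reduce_Cons)
qed simp

lemma map_red_cons:
  assumes "inj_on h S" "\<forall>d\<in>S. flip d \<in> S \<and> h (flip d) = flip (h d)" "a \<in> S" "set w \<subseteq> S"
  shows "map h (red_cons a w) = red_cons (h a) (map h w)"
proof (cases w)
  case (Cons b w')
  have "b \<in> S" "flip a \<in> S" "h (flip a) = flip (h a)" using assms Cons by auto
  then have "h b = flip (h a) \<longleftrightarrow> b = flip a" using assms(1) by (metis inj_on_eq_iff)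
  then show ?thesis using Cons by (simp add: red_cons_def)
qed (simp add: red_cons_def)

lemma map_reduce:
  assumes "inj_on h S" "\<forall>d\<in>S. flip d \<in> S \<and> h (flip d) = flip (h d)" "set w \<subseteq> S"
  shows "map h (reduce w) = reduce (map h w)"
  using assms(3)
proof (induction w)
  case (Cons a w)
  have "set (reduce w) \<subseteq> S" using Cons set_reduce by force
  then show ?case using Cons assms(1,2) by (simp add: reduce_Cons map_red_cons)
qed simp

section \<open>Groups of reduced words\<close>

lemma is_path_append:
  "is_path E src u (x @ y) w \<longleftrightarrow> (\<exists>v. is_path E src u x v \<and> is_path E src v y w)"
  by (induction x arbitrary: u) auto

lemma is_path_inv: "is_path E src u x v \<Longrightarrow> is_path E src v (inv_w x) u"
  by (induction x arbitrary: u) (auto simp: is_path_append)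

lemma is_path_reduce: "is_path E src u w v \<Longrightarrow> is_path E src u (reduce w) v"
proof (induction w arbitrary: u)
  case (Cons a w)
  then have "is_path E src u (a # reduce w) v" by simp
  then show ?case by (cases "reduce w") (auto simp: reduce_Cons red_cons_def)
qed simp

lemma is_path_set: "is_path E src u w v \<Longrightarrow> set w \<subseteq> E \<times> UNIV"
  by (induction w arbitrary: u) (auto simp: mem_Times_iff)

lemma is_path_map:
  assumes "\<forall>d\<in>E \<times> UNIV. h (flip d) = flip (h d) \<and> src' (h d) = hv (src d)"
    and "h ` (E \<times> UNIV) \<subseteq> E' \<times> UNIV"
  shows "is_path E src u w v \<Longrightarrow> is_path E' src' (hv u) (map h w) (hv v)"
proof (induction w arbitrary: u)
  case (Cons d w)
  then have d: "d \<in> E \<times> UNIV" "flip d \<in> E \<times> UNIV" by (auto simp: mem_Times_iff)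
  have "h (flip d) = flip (h d)" "src' (h d) = hv (src d)"
    using d(1) assms(1) by blast+
  moreover have "h d \<in> E' \<times> UNIV" using d(1) assms(2) by blast
  then have "fst (h d) \<in> E'" by (simp add: mem_Times_iff)
  moreover have "src' (h (flip d)) = hv (src (flip d))"
    using bspec[OF assms(1) d(2)] by blast
  moreover have "is_path E' src' (hv (src (flip d))) (map h w) (hv v)" using Cons by auto
  ultimately show ?case using Cons by (auto simp del: fst_flip)
qed simp

definition word_group :: "(word \<Rightarrow> bool) \<Rightarrow> word monoid" where
  "word_group L = \<lparr>carrier = {w. reduced w \<and> L w}, monoid.mult = (\<lambda>a b. reduce (a @ b)), one = []\<rparr>"

locale word_lang =
  fixes L :: "word \<Rightarrow> bool"
  assumes L_Nil: "L []"
    and L_mult: "L x \<Longrightarrow> L y \<Longrightarrow> L (reduce (x @ y))"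
    and L_inv: "L x \<Longrightarrow> L (inv_w x)"
begin

lemma group_word_group: "group (word_group L)"
proof (rule groupI)
  fix x assume "x \<in> carrier (word_group L)"
  then have "inv_w x \<in> carrier (word_group L)"
    "inv_w x \<otimes>\<^bsub>word_group L\<^esub> x = \<one>\<^bsub>word_group L\<^esub>"
    by (simp_all add: word_group_def reduced_inv_w L_inv)
  then show "\<exists>y\<in>carrier (word_group L). y \<otimes>\<^bsub>word_group L\<^esub> x = \<one>\<^bsub>word_group L\<^esub>" by blast
qed (auto simp: word_group_def L_Nil L_mult reduce_reduced)

lemma inv_word_group: "x \<in> carrier (word_group L) \<Longrightarrow> inv\<^bsub>word_group L\<^esub> x = inv_w x"
  by (rule group.inv_equality[OF group_word_group])
     (simp_all add: word_group_def reduced_inv_w L_inv)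

end

definition letters_below :: "nat \<Rightarrow> word \<Rightarrow> bool" where
  "letters_below n w \<longleftrightarrow> (\<forall>d\<in>set w. fst d < n)"

lemma free_group_eq_word_group: "free_group n = word_group (letters_below n)"
  by (simp add: free_group_def word_group_def letters_below_def)

lemma word_lang_letters_below: "word_lang (letters_below n)"
proof
  fix x y assume "letters_below n x" "letters_below n y"
  then show "letters_below n (reduce (x @ y))"
    using set_reduce[of "x @ y"] by (auto simp: letters_below_def)
qed (auto simp: letters_below_def set_inv_w)

lemma pi1_eq_word_group: "pi1 E src v0 = word_group (\<lambda>w. is_path E src v0 w v0)"
  by (simp add: pi1_def word_group_def conj_commute)

lemma word_lang_closed_paths: "word_lang (\<lambda>w. is_path E src v0 w v0)"
proof
  fix x y assume "is_path E src v0 x v0" "is_path E src v0 y v0"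
  then show "is_path E src v0 (reduce (x @ y)) v0"
    by (intro is_path_reduce) (auto simp: is_path_append)
qed (auto intro: is_path_inv)

lemma group_free: "group (FG n)"
  by (simp add: free_group_eq_word_group word_lang.group_word_group[OF word_lang_letters_below])

lemma group_pi1: "group (pi1 E src v0)"
  by (simp add: pi1_eq_word_group word_lang.group_word_group[OF word_lang_closed_paths])

lemma carrier_free: "carrier (FG n) = {w. reduced w \<and> (\<forall>d\<in>set w. fst d < n)}"
  by (simp add: free_group_def)

lemma mult_free: "x \<otimes>\<^bsub>FG n\<^esub> y = reduce (x @ y)"
  by (simp add: free_group_def)

lemma one_free: "\<one>\<^bsub>FG n\<^esub> = []"
  by (simp add: free_group_def)

lemma inv_free: "x \<in> carrier (FG n) \<Longrightarrow> inv\<^bsub>FG n\<^esub> x = inv_w x"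
  unfolding free_group_eq_word_group by (rule word_lang.inv_word_group[OF word_lang_letters_below])

lemma carrier_pi1: "carrier (pi1 E src v0) = {ds. is_path E src v0 ds v0 \<and> reduced ds}"
  by (simp add: pi1_def)

lemma mult_pi1: "x \<otimes>\<^bsub>pi1 E src v0\<^esub> y = reduce (x @ y)"
  by (simp add: pi1_def)

lemma inv_pi1: "x \<in> carrier (pi1 E src v0) \<Longrightarrow> inv\<^bsub>pi1 E src v0\<^esub> x = inv_w x"
  unfolding pi1_eq_word_group by (rule word_lang.inv_word_group[OF word_lang_closed_paths])

lemma generator_in_free: "i < n \<Longrightarrow> [(i, True)] \<in> carrier (FG n)"
  by (simp add: carrier_free)

lemma hom_free_group_ext:
  assumes f: "f \<in> hom (FG n) H" and g: "g \<in> hom (FG n) H" and "group H"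
    and gens: "\<And>i. i < n \<Longrightarrow> f [(i, True)] = g [(i, True)]"
    and "w \<in> carrier (FG n)"
  shows "f w = g w"
proof -
  interpret f: group_hom "FG n" H f
    using assms group_free by (simp add: group_hom_def group_hom_axioms_def)
  interpret g: group_hom "FG n" H g
    using assms group_free by (simp add: group_hom_def group_hom_axioms_def)
  show ?thesis using \<open>w \<in> carrier (FG n)\<close>
  proof (induction w)
  case Nil
  show ?case using f.hom_one g.hom_one by (simp add: one_free)
  next
  case (Cons a w)
  then have w: "w \<in> carrier (FG n)" and a: "[a] \<in> carrier (FG n)" and i: "fst a < n"
    by (simp_all add: carrier_free reduced_Cons)
  have "f [a] = g [a]"
  proof (cases "snd a")
    case True
    then show ?thesis using gens[OF i] by (metis prod.collapse)
  next
    case False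
    then have "[a] = inv\<^bsub>FG n\<^esub> [(fst a, True)]"
      using i by (cases a) (simp add: inv_free generator_in_free flip_def)
    then show ?thesis
      using f.hom_inv g.hom_inv gens[OF i] generator_in_free[OF i] by simp
  qed
  moreover have "a # w = [a] \<otimes>\<^bsub>FG n\<^esub> w"
    using Cons.prems by (simp add: mult_free carrier_free reduce_reduced)
  ultimately show ?case using Cons.IH w a by simp
  qed
qed

section \<open>Substitution automorphisms\<close>

definition subst :: "(letter \<Rightarrow> word) \<Rightarrow> word \<Rightarrow> word" where
  "subst \<sigma> w = reduce (concat (map \<sigma> w))"

definition flip_compatible :: "(letter \<Rightarrow> word) \<Rightarrow> bool" where
  "flip_compatible \<sigma> \<longleftrightarrow> (\<forall>a. \<sigma> (flip a) = inv_w (\<sigma> a))"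

lemma subst_red_cons:
  assumes "flip_compatible \<sigma>"
  shows "reduce (concat (map \<sigma> (red_cons a v))) = reduce (\<sigma> a @ concat (map \<sigma> v))"
proof (cases v)
  case (Cons b v')
  show ?thesis
  proof (cases "b = flip a")
    case True
    have "\<sigma> (flip a) = inv_w (\<sigma> a)" using assms unfolding flip_compatible_def by blast
    then show ?thesis using Cons True by (simp add: red_cons_def reduce_cancel)
  qed (use Cons in \<open>simp add: red_cons_def\<close>)
qed (simp add: red_cons_def)

lemma subst_reduce:
  assumes "flip_compatible \<sigma>"
  shows "subst \<sigma> (reduce w) = subst \<sigma> w"
proof (induction w)
  case (Cons a w)
  have "subst \<sigma> (reduce (a # w)) = reduce (\<sigma> a @ subst \<sigma> (reduce w))"
    by (simp add: subst_def reduce_Cons subst_red_cons[OF assms])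
  also have "\<dots> = subst \<sigma> (a # w)" using Cons by (simp add: subst_def)
  finally show ?case .
qed simp

lemma subst_mult:
  "flip_compatible \<sigma> \<Longrightarrow> subst \<sigma> (reduce (u @ v)) = reduce (subst \<sigma> u @ subst \<sigma> v)"
  by (simp add: subst_reduce) (simp add: subst_def)

lemma reduce_concat_reduce:
  "reduce (concat (map (\<lambda>a. reduce (\<rho> a)) w)) = reduce (concat (map \<rho> w))"
proof (induction w)
  case (Cons a w)
  have "reduce (concat (map (\<lambda>a. reduce (\<rho> a)) (a # w)))
      = reduce (\<rho> a @ reduce (concat (map (\<lambda>a. reduce (\<rho> a)) w)))"
    by simp
  then show ?case using Cons by simp
qed simp

lemma subst_subst:
  assumes "flip_compatible \<sigma>"
  shows "subst \<sigma> (subst \<tau> w) = subst (\<lambda>a. subst \<sigma> (\<tau> a)) w"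
proof -
  have "concat (map \<sigma> (concat (map \<tau> w))) = concat (map (\<lambda>a. concat (map \<sigma> (\<tau> a))) w)"
    by (induction w) auto
  then have "subst \<sigma> (subst \<tau> w) = reduce (concat (map (\<lambda>a. concat (map \<sigma> (\<tau> a))) w))"
    using subst_reduce[OF assms, of "concat (map \<tau> w)"] by (simp add: subst_def)
  also have "\<dots> = subst (\<lambda>a. subst \<sigma> (\<tau> a)) w"
    unfolding subst_def by (rule reduce_concat_reduce[symmetric])
  finally show ?thesis .
qed

lemma subst_carrier:
  assumes "\<And>a. fst a < n \<Longrightarrow> letters_below n (\<sigma> a)" "w \<in> carrier (FG n)"
  shows "subst \<sigma> w \<in> carrier (FG n)"
  using assms set_reduce[of "concat (map \<sigma> w)"]
  by (fastforce simp: carrier_free letters_below_def subst_def)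

lemma subst_inverse:
  assumes "flip_compatible \<sigma>" and "\<And>a. fst a < n \<Longrightarrow> subst \<sigma> (\<tau> a) = [a]"
    and "w \<in> carrier (FG n)"
  shows "subst \<sigma> (subst \<tau> w) = w"
proof -
  have "subst \<sigma> (subst \<tau> w) = subst (\<lambda>a. subst \<sigma> (\<tau> a)) w"
    by (rule subst_subst[OF assms(1)])
  also have "\<dots> = subst (\<lambda>a. [a]) w"
    unfolding subst_def[of _ w] using assms(2,3)
    by (intro arg_cong[where f = "\<lambda>x. reduce (concat x)"] map_cong) (auto simp: carrier_free)
  finally show ?thesis using assms(3) by (simp add: subst_def reduce_reduced carrier_free)
qed

lemma subst_auto:
  assumes \<sigma>: "flip_compatible \<sigma>" "\<And>a. fst a < n \<Longrightarrow> letters_below n (\<sigma> a)"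
    and \<tau>: "flip_compatible \<tau>" "\<And>a. fst a < n \<Longrightarrow> letters_below n (\<tau> a)"
    and inverse: "\<And>a. fst a < n \<Longrightarrow> subst \<sigma> (\<tau> a) = [a]"
      "\<And>a. fst a < n \<Longrightarrow> subst \<tau> (\<sigma> a) = [a]"
  shows "restrict (subst \<sigma>) (carrier (FG n)) \<in> auto (FG n)"
proof -
  have "subst \<sigma> \<in> hom (FG n) (FG n)"
    by (rule homI) (simp_all add: subst_carrier[OF \<sigma>(2)] mult_free subst_mult[OF \<sigma>(1)])
  then have "restrict (subst \<sigma>) (carrier (FG n)) \<in> hom (FG n) (FG n)"
    by (rule group.hom_restrict[OF group_free]) simp
  moreover have "bij_betw (subst \<sigma>) (carrier (FG n)) (carrier (FG n))"
  proof (rule bij_betwI[where g = "subst \<tau>"])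
    show "subst \<sigma> \<in> carrier (FG n) \<rightarrow> carrier (FG n)" "subst \<tau> \<in> carrier (FG n) \<rightarrow> carrier (FG n)"
      using \<sigma>(2) \<tau>(2) by (auto intro!: subst_carrier)
  qed (simp_all only: subst_inverse[OF \<sigma>(1) inverse(1)] subst_inverse[OF \<tau>(1) inverse(2)])
  then have "bij_betw (restrict (subst \<sigma>) (carrier (FG n))) (carrier (FG n)) (carrier (FG n))"
    by (rule bij_betw_cong[THEN iffD1, rotated]) simp
  ultimately show ?thesis by (simp add: auto_def Bij_def)
qed

definition transvection_subst :: "nat \<Rightarrow> nat \<Rightarrow> bool \<Rightarrow> letter \<Rightarrow> word" where
  "transvection_subst i j s a = (if a = (i, True) then [(i, True), (j, s)] else
                  if a = (i, False) then [(j, \<not> s), (i, False)] else [a])"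

definition transvection :: "nat \<Rightarrow> nat \<Rightarrow> nat \<Rightarrow> word \<Rightarrow> word" where
  "transvection n i j = restrict (subst (transvection_subst i j True)) (carrier (FG n))"

lemma flip_compatible_transvection_subst: "flip_compatible (transvection_subst i j s)"
  unfolding flip_compatible_def
proof
  fix a :: letter
  show "transvection_subst i j s (flip a) = inv_w (transvection_subst i j s a)"
    by (cases a; cases "snd a") (auto simp: transvection_subst_def flip_def)
qed

lemma transvection_subst_inverse:
  "i \<noteq> j \<Longrightarrow> subst (transvection_subst i j s) (transvection_subst i j (\<not> s) a) = [a]"
  by (cases a; cases "snd a")
     (auto simp: transvection_subst_def subst_def reduce_def red_cons_def flip_def)

lemma letters_below_transvection_subst:
  "i < n \<Longrightarrow> j < n \<Longrightarrow> fst a < n \<Longrightarrow> letters_below n (transvection_subst i j s a)"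
  by (auto simp: transvection_subst_def letters_below_def)

lemma transvection_auto:
  "i < n \<Longrightarrow> j < n \<Longrightarrow> i \<noteq> j \<Longrightarrow> transvection n i j \<in> auto (FG n)"
  unfolding transvection_def
  by (rule subst_auto[where \<tau> = "transvection_subst i j False"])
     (simp_all add: flip_compatible_transvection_subst letters_below_transvection_subst
       transvection_subst_inverse[where s = True, simplified]
       transvection_subst_inverse[where s = False, simplified])

section \<open>Homomorphisms to \<open>\<int>/p\<close>\<close>

lemma exists_mult_mod_eq:
  fixes a b t :: int and p :: nat
  assumes "Factorial_Ring.prime p" "a mod int p \<noteq> 0"
  shows "\<exists>m::nat. (b + int m * a) mod int p = t mod int p"
proof -
  have "coprime (int p) a"
    using assms by (simp add: prime_imp_coprime dvd_eq_mod_eq_0)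
  then obtain u v where uv: "u * a + v * int p = 1"
    using bezout_int[of a "int p"] by (metis coprime_iff_gcd_eq_1 gcd.commute)
  define m where "m = nat (((t - b) * u) mod int p)"
  have m: "int m = ((t - b) * u) mod int p"
    using assms(1) prime_gt_0_nat by (simp add: m_def)
  have "(b + int m * a) mod int p = (b + (t - b) * u * a) mod int p"
    unfolding m by (metis mod_add_right_eq mod_mult_left_eq)
  also have "(t - b) * u * a = (t - b) * (1 - v * int p)"
    using uv by (metis add_diff_cancel_right' mult.assoc)
  also have "b + (t - b) * (1 - v * int p) = t + (- (t - b) * v) * int p"
    by (simp add: algebra_simps)
  finally show ?thesis by auto
qed

definition letter_weight :: "(nat \<Rightarrow> int) \<Rightarrow> letter \<Rightarrow> int" where
  "letter_weight v a = (if snd a then v (fst a) else - v (fst a))"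

definition word_weight :: "(nat \<Rightarrow> int) \<Rightarrow> word \<Rightarrow> int" where
  "word_weight v w = sum_list (map (letter_weight v) w)"

definition weight_hom :: "nat \<Rightarrow> nat \<Rightarrow> (nat \<Rightarrow> int) \<Rightarrow> word \<Rightarrow> int" where
  "weight_hom n p v = restrict (\<lambda>w. word_weight v w mod int p) (carrier (FG n))"

lemma letter_weight_flip[simp]: "letter_weight v (flip a) = - letter_weight v a"
  by (simp add: letter_weight_def flip_def)

lemma word_weight_Nil[simp]: "word_weight v [] = 0"
  and word_weight_Cons[simp]: "word_weight v (a # w) = letter_weight v a + word_weight v w"
  and word_weight_append[simp]: "word_weight v (x @ y) = word_weight v x + word_weight v y"
  by (simp_all add: word_weight_def)

lemma word_weight_reduce[simp]: "word_weight v (reduce w) = word_weight v w"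
proof (induction w)
  case (Cons a w)
  then show ?case by (cases "reduce w") (auto simp: reduce_Cons red_cons_def)
qed simp

lemma weight_hom_hom: "p > 0 \<Longrightarrow> weight_hom n p v \<in> hom (FG n) (ZP p)"
proof (rule homI)
  fix x y assume "x \<in> carrier (FG n)" "y \<in> carrier (FG n)"
  moreover from this have "x \<otimes>\<^bsub>FG n\<^esub> y \<in> carrier (FG n)"
    by (simp add: group.is_monoid[OF group_free] monoid.m_closed)
  ultimately show "weight_hom n p v (x \<otimes>\<^bsub>FG n\<^esub> y) = weight_hom n p v x \<otimes>\<^bsub>ZP p\<^esub> weight_hom n p v y"
    by (simp add: weight_hom_def mult_free mod_add_eq)
qed (simp add: weight_hom_def carrier_integer_mod_group)

lemma weight_hom_extensional: "weight_hom n p v \<in> extensional (carrier (FG n))"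
  by (simp add: weight_hom_def)

lemma weight_hom_generator: "i < n \<Longrightarrow> weight_hom n p v [(i, True)] = v i mod int p"
  by (simp add: weight_hom_def carrier_free letter_weight_def)

lemma weight_hom_cong:
  assumes "\<And>i. i < n \<Longrightarrow> v i mod int p = v' i mod int p"
  shows "weight_hom n p v = weight_hom n p v'"
  unfolding weight_hom_def
proof (rule restrict_ext)
  have "word_weight v w mod int p = word_weight v' w mod int p" if "\<forall>d\<in>set w. fst d < n" for w
    using that
  proof (induction w)
    case (Cons a w)
    then have k: "v (fst a) mod int p = v' (fst a) mod int p" using assms by simp
    have "(- v (fst a)) mod int p = (- v' (fst a)) mod int p"
      by (metis k mod_minus_eq)
    then have "letter_weight v a mod int p = letter_weight v' a mod int p"
      using k by (simp add: letter_weight_def)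
    with Cons show ?case by (metis list.set_intros(2) mod_add_eq word_weight_Cons)
  qed simp
  then show "word_weight v w mod int p = word_weight v' w mod int p" if "w \<in> carrier (FG n)" for w
    using that by (simp add: carrier_free)
qed

lemma hom_eq_weight_hom:
  assumes "p > 0" "f \<in> hom (FG n) (ZP p)" "f \<in> extensional (carrier (FG n))"
  shows "f = weight_hom n p (\<lambda>i. f [(i, True)])"
proof (rule extensionalityI[OF assms(3) weight_hom_extensional])
  fix w assume w: "w \<in> carrier (FG n)"
  show "f w = weight_hom n p (\<lambda>i. f [(i, True)]) w"
  proof (rule hom_free_group_ext[OF assms(2) weight_hom_hom[OF assms(1)] group_integer_mod_group _ w])
    fix i assume i: "i < n"
    have "f [(i, True)] \<in> carrier (ZP p)"
      using hom_in_carrier[OF assms(2) generator_in_free[OF i]] .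
    then have "f [(i, True)] \<in> {0..<int p}"
      using assms(1) by (simp add: carrier_integer_mod_group)
    then show "f [(i, True)] = weight_hom n p (\<lambda>i. f [(i, True)]) [(i, True)]"
      using i by (simp add: weight_hom_generator)
  qed
qed

lemma nontriv_homs_eq_weight_hom:
  "p > 0 \<Longrightarrow> f \<in> nontriv_homs n p \<Longrightarrow> f = weight_hom n p (\<lambda>i. f [(i, True)])"
  by (rule hom_eq_weight_hom) (simp_all add: nontriv_homs_def)

lemma nontriv_homs_generator:
  assumes "p > 0" "f \<in> nontriv_homs n p"
  shows "\<exists>j<n. f [(j, True)] mod int p \<noteq> 0"
proof (rule ccontr)
  assume "\<not> ?thesis"
  then have "weight_hom n p (\<lambda>i. f [(i, True)]) = weight_hom n p (\<lambda>i. 0)"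
    by (intro weight_hom_cong) simp
  then have "f = weight_hom n p (\<lambda>i. 0)"
    using nontriv_homs_eq_weight_hom[OF assms] by simp
  moreover have "word_weight (\<lambda>i. 0) w = 0" for w
    by (induction w) (simp_all add: letter_weight_def)
  ultimately show False using assms(2) by (auto simp: nontriv_homs_def weight_hom_def)
qed

lemma finite_nontriv_homs:
  assumes "p > 0"
  shows "finite (nontriv_homs n p)"
proof (rule finite_subset)
  show "nontriv_homs n p \<subseteq> weight_hom n p ` (PiE {..<n} (\<lambda>_. {0..<int p}))"
  proof
    fix f assume f: "f \<in> nontriv_homs n p"
    define v where "v = restrict (\<lambda>i. f [(i, True)]) {..<n}"
    have "f [(i, True)] \<in> {0..<int p}" if "i < n" for i
    proof -
      have "f \<in> hom (FG n) (ZP p)" using f by (simp add: nontriv_homs_def)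
      then have "f [(i, True)] \<in> carrier (ZP p)" using generator_in_free[OF that] by (rule hom_in_carrier)
      then show ?thesis using assms by (simp add: carrier_integer_mod_group)
    qed
    then have "v \<in> PiE {..<n} (\<lambda>_. {0..<int p})" by (simp add: v_def)
    moreover have "weight_hom n p (\<lambda>i. f [(i, True)]) = weight_hom n p v"
      by (rule weight_hom_cong) (simp add: v_def)
    then have "f = weight_hom n p v"
      using nontriv_homs_eq_weight_hom[OF assms f] by simp
    ultimately show "f \<in> weight_hom n p ` (PiE {..<n} (\<lambda>_. {0..<int p}))" by blast
  qed
qed (intro finite_imageI finite_PiE; simp)

section \<open>Transitivity of \<open>Aut(F\<^sub>n)\<close> on nontrivial homomorphisms\<close>

abbreviation AG :: "nat \<Rightarrow> (word \<Rightarrow> word) monoid" where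
  "AG n \<equiv> AutoGroup (FG n)"

lemma group_AG: "group (AG n)"
  by (rule group.AutoGroup[OF group_free])

lemma carrier_AG: "carrier (AG n) = auto (FG n)"
  by (simp add: AutoGroup_def BijGroup_def)

lemma mult_AG: "\<Phi> \<in> auto (FG n) \<Longrightarrow> \<Psi> \<in> auto (FG n) \<Longrightarrow>
   \<Phi> \<otimes>\<^bsub>AG n\<^esub> \<Psi> = compose (carrier (FG n)) \<Phi> \<Psi>"
  by (simp add: AutoGroup_def BijGroup_def auto_def)

lemma one_AG: "\<one>\<^bsub>AG n\<^esub> = (\<lambda>x\<in>carrier (FG n). x)"
  by (simp add: AutoGroup_def BijGroup_def)

lemma auto_carrier: "\<Phi> \<in> auto (FG n) \<Longrightarrow> w \<in> carrier (FG n) \<Longrightarrow> \<Phi> w \<in> carrier (FG n)"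
  unfolding auto_def by (blast intro: hom_in_carrier)

lemma auto_hom: "\<Phi> \<in> auto (FG n) \<Longrightarrow> \<Phi> \<in> hom (FG n) (FG n)"
  by (simp add: auto_def)

lemma auto_bij: "\<Phi> \<in> auto (FG n) \<Longrightarrow> bij_betw \<Phi> (carrier (FG n)) (carrier (FG n))"
  by (simp add: auto_def Bij_def)

lemma auto_Aut: "\<Phi> \<in> auto (FG n) \<Longrightarrow> \<Phi> \<in> Aut n"
  by (simp add: Aut_def iso_def auto_hom auto_bij)

definition hom_aut_act :: "nat \<Rightarrow> (word \<Rightarrow> word) \<Rightarrow> (word \<Rightarrow> int) \<Rightarrow> (word \<Rightarrow> int)" where
  "hom_aut_act n \<Phi> f = restrict (f \<circ> \<Phi>) (carrier (FG n))"

lemma hom_aut_act_one: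
  "f \<in> extensional (carrier (FG n)) \<Longrightarrow> hom_aut_act n \<one>\<^bsub>AG n\<^esub> f = f"
  unfolding hom_aut_act_def one_AG by (rule extensionalityI[where A = "carrier (FG n)"]) auto

lemma hom_aut_act_mult: "\<Phi> \<in> auto (FG n) \<Longrightarrow> \<Psi> \<in> auto (FG n) \<Longrightarrow>
   hom_aut_act n \<Psi> (hom_aut_act n \<Phi> f) = hom_aut_act n (\<Phi> \<otimes>\<^bsub>AG n\<^esub> \<Psi>) f"
  unfolding hom_aut_act_def mult_AG by (rule restrict_ext) (simp add: auto_carrier compose_def)

lemma hom_aut_act_nontriv_homs:
  assumes "f \<in> nontriv_homs n p" "\<Phi> \<in> auto (FG n)"
  shows "hom_aut_act n \<Phi> f \<in> nontriv_homs n p"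
proof -
  have "f \<circ> \<Phi> \<in> hom (FG n) (ZP p)"
    using assms by (intro hom_compose[OF auto_hom]) (auto simp: nontriv_homs_def)
  then have "hom_aut_act n \<Phi> f \<in> hom (FG n) (ZP p)"
    unfolding hom_aut_act_def by (rule group.hom_restrict[OF group_free]) simp
  moreover obtain w where w: "w \<in> carrier (FG n)" "f w \<noteq> 0"
    using assms(1) by (auto simp: nontriv_homs_def)
  moreover obtain u where "u \<in> carrier (FG n)" "\<Phi> u = w"
    using auto_bij[OF assms(2)] w(1) by (metis bij_betw_iff_bijections)
  ultimately show ?thesis by (force simp: nontriv_homs_def hom_aut_act_def)
qed

definition aut_related :: "nat \<Rightarrow> (word \<Rightarrow> int) \<Rightarrow> (word \<Rightarrow> int) \<Rightarrow> bool" where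
  "aut_related n f g \<longleftrightarrow> (\<exists>\<Phi>\<in>auto (FG n). g = hom_aut_act n \<Phi> f)"

lemma aut_related_refl: "f \<in> extensional (carrier (FG n)) \<Longrightarrow> aut_related n f f"
  unfolding aut_related_def
  using hom_aut_act_one[of f n] group.is_monoid[OF group_AG] carrier_AG by (metis monoid.one_closed)

lemma aut_related_trans: "aut_related n f g \<Longrightarrow> aut_related n g h \<Longrightarrow> aut_related n f h"
  unfolding aut_related_def
  using hom_aut_act_mult monoid.m_closed[OF group.is_monoid[OF group_AG]] carrier_AG by metis

lemma aut_related_sym:
  assumes "f \<in> extensional (carrier (FG n))" "aut_related n f g"
  shows "aut_related n g f"
proof -
  interpret G: group "AG n" by (rule group_AG)
  obtain \<Phi> where \<Phi>: "\<Phi> \<in> auto (FG n)" "g = hom_aut_act n \<Phi> f"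
    using assms(2) aut_related_def by blast
  have \<Phi>': "inv\<^bsub>AG n\<^esub> \<Phi> \<in> auto (FG n)" using \<Phi>(1) carrier_AG G.inv_closed by metis
  have "hom_aut_act n (inv\<^bsub>AG n\<^esub> \<Phi>) g = hom_aut_act n (\<Phi> \<otimes>\<^bsub>AG n\<^esub> inv\<^bsub>AG n\<^esub> \<Phi>) f"
    using \<Phi> \<Phi>' hom_aut_act_mult by simp
  also have "\<dots> = f" using \<Phi>(1) carrier_AG G.r_inv hom_aut_act_one[OF assms(1)] by metis
  finally show ?thesis using \<Phi>' aut_related_def by metis
qed

lemma word_weight_transvection:
  assumes "i \<noteq> j"
  shows "word_weight v (subst (transvection_subst i j True) w) = word_weight (v(i := v i + v j)) w"
proof -
  have "word_weight v (transvection_subst i j True a) = letter_weight (v(i := v i + v j)) a" for a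
    using assms by (cases a) (auto simp: transvection_subst_def letter_weight_def)
  then have "word_weight v (concat (map (transvection_subst i j True) w))
      = word_weight (v(i := v i + v j)) w"
    by (induction w) simp_all
  then show ?thesis by (simp add: subst_def)
qed

lemma aut_related_transvection:
  assumes "i < n" "j < n" "i \<noteq> j"
  shows "aut_related n (weight_hom n p v) (weight_hom n p (v(i := v i + v j)))"
  unfolding aut_related_def
proof (rule bexI[OF _ transvection_auto[OF assms]])
  show "weight_hom n p (v(i := v i + v j)) = hom_aut_act n (transvection n i j) (weight_hom n p v)"
    unfolding hom_aut_act_def weight_hom_def[of n p "v(i := v i + v j)"]
  proof (rule restrict_ext)
    fix w assume w: "w \<in> carrier (FG n)"
    then have "transvection n i j w \<in> carrier (FG n)"
      using transvection_auto[OF assms] by (rule auto_carrier[rotated])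
    then show "word_weight (v(i := v i + v j)) w mod int p = (weight_hom n p v \<circ> transvection n i j) w"
      using w assms by (simp add: weight_hom_def transvection_def word_weight_transvection)
  qed
qed

lemma aut_related_transvection_power:
  assumes "i < n" "j < n" "i \<noteq> j"
  shows "aut_related n (weight_hom n p v) (weight_hom n p (v(i := v i + int m * v j)))"
proof (induction m)
  case 0
  then show ?case by (simp add: aut_related_refl weight_hom_extensional)
next
  case (Suc m)
  define v' where "v' = v(i := v i + int m * v j)"
  have "v'(i := v' i + v' j) = v(i := v i + int (Suc m) * v j)"
    using assms(3) by (simp add: v'_def algebra_simps)
  then show ?case
    using Suc.IH aut_related_transvection[OF assms, of p v'] aut_related_trans
    unfolding v'_def by metis
qed

lemma aut_related_set_weight:
  assumes "Factorial_Ring.prime p" "i < n" "j < n" "i \<noteq> j" "v j mod int p \<noteq> 0"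
  shows "\<exists>v'. aut_related n (weight_hom n p v) (weight_hom n p v') \<and>
    v' i mod int p = t mod int p \<and> (\<forall>k. k \<noteq> i \<longrightarrow> v' k = v k)"
proof -
  obtain m :: nat where "(v i + int m * v j) mod int p = t mod int p"
    using exists_mult_mod_eq[OF assms(1,5)] by blast
  then show ?thesis
    using aut_related_transvection_power[OF assms(2-4)] by (intro exI[of _ "v(i := v i + int m * v j)"]) simp
qed

lemma aut_related_first_weight_one:
  assumes p: "Factorial_Ring.prime p" and n: "n \<ge> 2" and j: "j < n" "v j mod int p \<noteq> 0"
  shows "\<exists>v'. aut_related n (weight_hom n p v) (weight_hom n p v') \<and> v' 0 mod int p = 1"
proof -
  have one: "1 mod int p = 1" using p prime_gt_1_nat by simp
  show ?thesis
  proof (cases "j = 0")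
    case False
    then show ?thesis using aut_related_set_weight[OF p, of 0 n j v 1] j one by auto
  next
    case True
    obtain v' where v': "aut_related n (weight_hom n p v) (weight_hom n p v')" "v' 1 mod int p = 1"
      using aut_related_set_weight[OF p, of 1 n j v 1] j n True one by auto
    moreover obtain v'' where "aut_related n (weight_hom n p v') (weight_hom n p v'')"
      "v'' 0 mod int p = 1"
      using aut_related_set_weight[OF p, of 0 n 1 v' 1] n v'(2) one by auto
    ultimately show ?thesis using aut_related_trans by metis
  qed
qed

lemma aut_related_clear_weights:
  assumes p: "Factorial_Ring.prime p" and v: "v 0 mod int p = 1" and "K \<le> n"
  shows "\<exists>v'. aut_related n (weight_hom n p v) (weight_hom n p v') \<and> v' 0 mod int p = 1 \<and>
    (\<forall>k. 0 < k \<and> k < K \<longrightarrow> v' k mod int p = 0)"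
  using \<open>K \<le> n\<close>
proof (induction K)
  case 0
  then show ?case using v by (auto intro: aut_related_refl weight_hom_extensional)
next
  case (Suc K)
  then obtain v' where v': "aut_related n (weight_hom n p v) (weight_hom n p v')"
    "v' 0 mod int p = 1" "\<forall>k. 0 < k \<and> k < K \<longrightarrow> v' k mod int p = 0"
    by auto
  show ?case
  proof (cases "K = 0")
    case False
    obtain v'' where v'': "aut_related n (weight_hom n p v') (weight_hom n p v'')"
      "v'' K mod int p = 0" "\<forall>k. k \<noteq> K \<longrightarrow> v'' k = v' k"
      using aut_related_set_weight[OF p, of K n 0 v' 0] Suc.prems False v'(2) by auto
    then have "\<forall>k. 0 < k \<and> k < Suc K \<longrightarrow> v'' k mod int p = 0" "v'' 0 mod int p = 1"
      using v'(2,3) False by (metis less_Suc_eq)+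
    then show ?thesis using v'(1) v''(1) aut_related_trans by blast
  qed (use v' in auto)
qed

definition basis0 :: "nat \<Rightarrow> int" where
  "basis0 k = (if k = 0 then 1 else 0)"

lemma aut_related_basis0:
  assumes p: "Factorial_Ring.prime p" and n: "n \<ge> 2" and f: "f \<in> nontriv_homs n p"
  shows "aut_related n f (weight_hom n p basis0)"
proof -
  have p0: "p > 0" using p prime_gt_0_nat by blast
  obtain j where "j < n" "f [(j, True)] mod int p \<noteq> 0"
    using nontriv_homs_generator[OF p0 f] by blast
  then obtain v where v: "aut_related n f (weight_hom n p v)" "v 0 mod int p = 1"
    using aut_related_first_weight_one[OF p n] hom_eq_weight_hom[OF p0, of f n] f
    by (metis (no_types, lifting) mem_Collect_eq nontriv_homs_def)
  then obtain v' where v': "aut_related n (weight_hom n p v) (weight_hom n p v')"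
    "v' 0 mod int p = 1" "\<forall>k. 0 < k \<and> k < n \<longrightarrow> v' k mod int p = 0"
    using aut_related_clear_weights[where v = v and K = n and n = n, OF p v(2)] by blast
  have "weight_hom n p v' = weight_hom n p basis0"
    using v'(2,3) p prime_gt_1_nat by (intro weight_hom_cong) (auto simp: basis0_def)
  then show ?thesis using v(1) v'(1) aut_related_trans by metis
qed

theorem nontriv_homs_aut_related:
  assumes "Factorial_Ring.prime p" "n \<ge> 2" "f \<in> nontriv_homs n p" "g \<in> nontriv_homs n p"
  shows "aut_related n f g"
proof -
  have "aut_related n (weight_hom n p basis0) g"
    using aut_related_sym[of g n] aut_related_basis0[OF assms(1,2,4)] assms(4)
    by (simp add: nontriv_homs_def)
  then show ?thesis using aut_related_basis0[OF assms(1,2,3)] by (rule aut_related_trans[rotated])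
qed

section \<open>Double cosets\<close>

lemma bij_betw_images_same_fibres:
  assumes "\<And>a b. a \<in> D \<Longrightarrow> b \<in> D \<Longrightarrow> f a = f b \<longleftrightarrow> g a = g b"
  shows "bij_betw (\<lambda>y. g (SOME a. a \<in> D \<and> f a = y)) (f ` D) (g ` D)"
proof -
  have some: "(SOME a. a \<in> D \<and> f a = f b) \<in> D \<and> f (SOME a. a \<in> D \<and> f a = f b) = f b"
    if "b \<in> D" for b
    by (rule someI[where x = b]) (use that in simp)
  then have g_some: "g (SOME a. a \<in> D \<and> f a = f b) = g b" if "b \<in> D" for b
    using assms that by blast
  show ?thesis
  proof (rule bij_betw_imageI)
    show "inj_on (\<lambda>y. g (SOME a. a \<in> D \<and> f a = y)) (f ` D)"
      by (rule inj_onI) (use g_some assms in force)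
    show "(\<lambda>y. g (SOME a. a \<in> D \<and> f a = y)) ` f ` D = g ` D"
      using g_some by (auto simp: image_image)
  qed
qed

lemma (in group) inv_image_carrier: "(\<lambda>a. inv a) ` carrier G = carrier G"
proof
  show "carrier G \<subseteq> (\<lambda>a. inv a) ` carrier G"
  proof
    fix a assume "a \<in> carrier G"
    then show "a \<in> (\<lambda>a. inv a) ` carrier G" by (intro image_eqI[of _ _ "inv a"]) simp_all
  qed
qed auto

lemma (in group) double_coset_inv:
  assumes "subgroup S G" "subgroup A G" "a \<in> carrier G" "s \<in> S" "c \<in> A"
  shows "inv (s \<otimes> a \<otimes> c) = inv c \<otimes> inv a \<otimes> inv s \<and> inv c \<in> A \<and> inv s \<in> S"
  using assms by (simp add: inv_mult_group m_assoc subgroup.mem_carrier subgroup.m_inv_closed)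

lemma (in group) double_coset_rel_inv:
  assumes "subgroup S G" "subgroup A G" "a \<in> carrier G" "b \<in> carrier G"
  shows "(\<exists>s\<in>S. \<exists>c\<in>A. b = s \<otimes> a \<otimes> c) \<longleftrightarrow> (\<exists>c\<in>A. \<exists>s\<in>S. inv b = c \<otimes> inv a \<otimes> s)"
proof
  assume "\<exists>s\<in>S. \<exists>c\<in>A. b = s \<otimes> a \<otimes> c"
  then show "\<exists>c\<in>A. \<exists>s\<in>S. inv b = c \<otimes> inv a \<otimes> s"
    using double_coset_inv[OF assms(1-3)] by blast
next
  assume "\<exists>c\<in>A. \<exists>s\<in>S. inv b = c \<otimes> inv a \<otimes> s"
  then obtain c s where "c \<in> A" "s \<in> S" "inv b = c \<otimes> inv a \<otimes> s" by blast
  then have "inv (inv b) = inv s \<otimes> inv (inv a) \<otimes> inv c" "inv s \<in> S" "inv c \<in> A"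
    using double_coset_inv[OF assms(2,1), of "inv a" c s] assms(3) by auto
  then show "\<exists>s\<in>S. \<exists>c\<in>A. b = s \<otimes> a \<otimes> c" using assms(3,4) by auto
qed

text \<open>A right action of \<open>G\<close>, only required to be associative along the orbit of the base point \<open>x0\<close>.\<close>

locale orbit_action = group G for G (structure) +
  fixes act :: "'x \<Rightarrow> 'a \<Rightarrow> 'x" and x0 :: 'x
  assumes act_one: "act x0 \<one> = x0"
    and act_mult: "a \<in> carrier G \<Longrightarrow> b \<in> carrier G \<Longrightarrow> act (act x0 a) b = act x0 (a \<otimes> b)"
begin

definition stabiliser :: "'a set" where
  "stabiliser = {a \<in> carrier G. act x0 a = x0}"

lemma act_eq_iff:
  assumes "a \<in> carrier G" "b \<in> carrier G"
  shows "act x0 a = act x0 b \<longleftrightarrow> a \<otimes> inv b \<in> stabiliser"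
proof -
  have "act x0 (a \<otimes> inv b) = act (act x0 a) (inv b)"
    using assms by (simp add: act_mult)
  moreover have "act x0 a = act (act x0 (a \<otimes> inv b)) b"
    using assms by (simp add: act_mult m_assoc)
  moreover have "act (act x0 b) (inv b) = x0"
    using assms by (simp add: act_mult act_one)
  ultimately show ?thesis using assms by (auto simp: stabiliser_def)
qed

lemma subgroup_stabiliser: "subgroup stabiliser G"
proof (rule subgroupI)
  fix a b assume "a \<in> stabiliser" "b \<in> stabiliser"
  then show "a \<otimes> b \<in> stabiliser" by (auto simp: stabiliser_def simp flip: act_mult)
next
  fix a assume "a \<in> stabiliser"
  then show "inv a \<in> stabiliser" using act_eq_iff[of \<one> a] by (auto simp: stabiliser_def act_one)
qed (auto simp: stabiliser_def act_one)

lemma orbit_image_eq_iff: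
  assumes H: "subgroup H G" and ab: "a \<in> carrier G" "b \<in> carrier G"
  shows "(\<lambda>c. act (act x0 a) c) ` H = (\<lambda>c. act (act x0 b) c) ` H
    \<longleftrightarrow> (\<exists>s\<in>stabiliser. \<exists>c\<in>H. b = s \<otimes> a \<otimes> c)"
proof -
  interpret H: subgroup H G by (rule H)
  have img: "(\<lambda>c. act (act x0 a) c) ` H = (\<lambda>c. act x0 (a \<otimes> c)) ` H" if "a \<in> carrier G" for a
    using that act_mult by (intro image_cong) auto
  show ?thesis
  proof
    assume eq: "(\<lambda>c. act (act x0 a) c) ` H = (\<lambda>c. act (act x0 b) c) ` H"
    have "act x0 b \<in> (\<lambda>c. act x0 (b \<otimes> c)) ` H"
      using ab by (metis H.one_closed image_eqI r_one)
    then have "act x0 b \<in> (\<lambda>c. act x0 (a \<otimes> c)) ` H"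
      using eq img[OF ab(1)] img[OF ab(2)] by simp
    then obtain c where c: "c \<in> H" "act x0 b = act x0 (a \<otimes> c)" by blast
    then have "b \<otimes> inv (a \<otimes> c) \<in> stabiliser" "b = (b \<otimes> inv (a \<otimes> c)) \<otimes> a \<otimes> c"
      using ab act_eq_iff[of b "a \<otimes> c"] by (simp_all add: m_assoc inv_mult_group)
    then show "\<exists>s\<in>stabiliser. \<exists>c\<in>H. b = s \<otimes> a \<otimes> c" using c(1) by blast
  next
    assume "\<exists>s\<in>stabiliser. \<exists>c\<in>H. b = s \<otimes> a \<otimes> c"
    then obtain s c where s: "s \<in> carrier G" "act x0 s = x0" and c: "c \<in> H" "b = s \<otimes> a \<otimes> c"
      by (auto simp: stabiliser_def)
    have "act x0 (b \<otimes> d) = act x0 (a \<otimes> (c \<otimes> d))" if "d \<in> carrier G" for d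
      using s c ab that act_mult[of s "a \<otimes> (c \<otimes> d)"] by (simp add: m_assoc)
    then have "(\<lambda>d. act x0 (b \<otimes> d)) ` H = (\<lambda>d. act x0 (a \<otimes> d)) ` ((\<lambda>d. c \<otimes> d) ` H)"
      by (auto simp: image_image)
    also have "(\<lambda>d. c \<otimes> d) ` H = H"
      using coset_join3[OF H.mem_carrier[OF c(1)] H c(1)]
      unfolding l_coset_def UNION_singleton_eq_range .
    finally show "(\<lambda>c. act (act x0 a) c) ` H = (\<lambda>c. act (act x0 b) c) ` H"
      using img ab by simp
  qed
qed

end

text \<open>Both sides are in bijection with the double cosets \<open>S\<bs>G/A\<close>, via \<open>a \<mapsto> x0\<cdot>a\<close> and \<open>a \<mapsto> y0\<cdot>a\<inverse>\<close>.\<close>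

theorem double_coset_duality:
  assumes X: "orbit_action G act x0" and Y: "orbit_action G act' y0"
  defines "S \<equiv> orbit_action.stabiliser G act x0" and "A \<equiv> orbit_action.stabiliser G act' y0"
  shows "\<exists>h. bij_betw h ((\<lambda>y. (\<lambda>c. act y c) ` A) ` (act x0 ` carrier G))
    ((\<lambda>f. (\<lambda>s. act' f s) ` S) ` (act' y0 ` carrier G))"
proof -
  interpret X: orbit_action G act x0 by (rule X)
  interpret Y: orbit_action G act' y0 by (rule Y)
  have S: "subgroup S G" and A: "subgroup A G"
    unfolding S_def A_def by (rule X.subgroup_stabiliser Y.subgroup_stabiliser)+
  define qA where "qA a = (\<lambda>c. act (act x0 a) c) ` A" for a
  define qS where "qS a = (\<lambda>s. act' (act' y0 (inv\<^bsub>G\<^esub> a)) s) ` S" for a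
  have "qA a = qA b \<longleftrightarrow> qS a = qS b" if "a \<in> carrier G" "b \<in> carrier G" for a b
  proof -
    have "qA a = qA b \<longleftrightarrow> (\<exists>s\<in>S. \<exists>c\<in>A. b = s \<otimes>\<^bsub>G\<^esub> a \<otimes>\<^bsub>G\<^esub> c)"
      unfolding qA_def S_def by (rule X.orbit_image_eq_iff[OF A that])
    also have "\<dots> \<longleftrightarrow> (\<exists>c\<in>A. \<exists>s\<in>S. inv\<^bsub>G\<^esub> b = c \<otimes>\<^bsub>G\<^esub> inv\<^bsub>G\<^esub> a \<otimes>\<^bsub>G\<^esub> s)"
      by (rule X.double_coset_rel_inv[OF S A that])
    also have "\<dots> \<longleftrightarrow> qS a = qS b"
      unfolding qS_def A_def using that
      by (intro Y.orbit_image_eq_iff[OF S, symmetric]) simp_all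
    finally show ?thesis .
  qed
  then have "bij_betw (\<lambda>y. qS (SOME a. a \<in> carrier G \<and> qA a = y)) (qA ` carrier G) (qS ` carrier G)"
    by (rule bij_betw_images_same_fibres)
  moreover have "act' y0 ` carrier G = act' y0 ` ((\<lambda>a. inv\<^bsub>G\<^esub> a) ` carrier G)"
    by (simp add: X.inv_image_carrier)
  ultimately show ?thesis unfolding qA_def qS_def by (auto simp: image_image)
qed

section \<open>Outer automorphism classes\<close>

lemma Aut_carrier: "\<Phi> \<in> Aut n \<Longrightarrow> w \<in> carrier (FG n) \<Longrightarrow> \<Phi> w \<in> carrier (FG n)"
  unfolding Aut_def iso_def by (blast intro: hom_in_carrier)

lemma Aut_restrict_auto: "\<Phi> \<in> Aut n \<Longrightarrow> restrict \<Phi> (carrier (FG n)) \<in> auto (FG n)"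
proof -
  assume "\<Phi> \<in> Aut n"
  then have h: "\<Phi> \<in> hom (FG n) (FG n)" "bij_betw \<Phi> (carrier (FG n)) (carrier (FG n))"
    by (auto simp: Aut_def iso_def)
  have "restrict \<Phi> (carrier (FG n)) \<in> hom (FG n) (FG n)"
    by (rule group.hom_restrict[OF group_free h(1)]) simp
  moreover have "bij_betw (restrict \<Phi> (carrier (FG n))) (carrier (FG n)) (carrier (FG n))"
    using h(2) by (rule bij_betw_cong[THEN iffD1, rotated]) simp
  ultimately show ?thesis by (simp add: auto_def Bij_def)
qed

lemma Out_eq_auto_image: "Out n = out_class n ` auto (FG n)"
proof
  have "out_class n (restrict \<Phi> (carrier (FG n))) = out_class n \<Phi>" for \<Phi>
    unfolding out_class_def by auto
  then show "Out n \<subseteq> out_class n ` auto (FG n)"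
    unfolding Out_def using Aut_restrict_auto by (metis image_subsetI imageI)
  show "out_class n ` auto (FG n) \<subseteq> Out n"
    unfolding Out_def using auto_Aut by blast
qed

lemma out_classE:
  assumes "\<Phi> \<in> out_class n \<Phi>0"
  obtains g where "\<Phi> \<in> Aut n" "g \<in> carrier (FG n)"
    "\<And>w. w \<in> carrier (FG n) \<Longrightarrow> \<Phi> w = g \<otimes>\<^bsub>FG n\<^esub> \<Phi>0 w \<otimes>\<^bsub>FG n\<^esub> inv\<^bsub>FG n\<^esub> g"
  using assms unfolding out_class_def by blast

lemma self_out_class: "\<Phi> \<in> Aut n \<Longrightarrow> \<Phi> \<in> out_class n \<Phi>"
proof -
  assume \<Phi>: "\<Phi> \<in> Aut n"
  interpret F: group "FG n" by (rule group_free)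
  have "\<forall>w\<in>carrier (FG n). \<Phi> w = \<one>\<^bsub>FG n\<^esub> \<otimes>\<^bsub>FG n\<^esub> \<Phi> w \<otimes>\<^bsub>FG n\<^esub> inv\<^bsub>FG n\<^esub> \<one>\<^bsub>FG n\<^esub>"
    using Aut_carrier[OF \<Phi>] by simp
  then show ?thesis unfolding out_class_def using \<Phi> F.one_closed by blast
qed

lemma out_rep_out_class: "\<Phi> \<in> Aut n \<Longrightarrow> out_rep (out_class n \<Phi>) \<in> out_class n \<Phi>"
  unfolding out_rep_def using self_out_class by (metis someI)

lemma out_rep_Aut: "\<phi> \<in> Out n \<Longrightarrow> out_rep \<phi> \<in> Aut n"
  unfolding Out_def using out_rep_out_class out_classE by (metis image_iff)

lemma hom_conj_comm_group:
  assumes "h \<in> hom G H" "group G" "comm_group H" "g \<in> carrier G" "x \<in> carrier G"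
  shows "h (g \<otimes>\<^bsub>G\<^esub> x \<otimes>\<^bsub>G\<^esub> inv\<^bsub>G\<^esub> g) = h x"
proof -
  interpret H: comm_group H by (rule assms(3))
  interpret h: group_hom G H h
    using assms by (simp add: group_hom_def group_hom_axioms_def comm_group.axioms(2))
  have "h (g \<otimes>\<^bsub>G\<^esub> x \<otimes>\<^bsub>G\<^esub> inv\<^bsub>G\<^esub> g) = h g \<otimes>\<^bsub>H\<^esub> h x \<otimes>\<^bsub>H\<^esub> inv\<^bsub>H\<^esub> h g"
    using assms(4,5) by simp
  also have "\<dots> = h x \<otimes>\<^bsub>H\<^esub> (h g \<otimes>\<^bsub>H\<^esub> inv\<^bsub>H\<^esub> h g)"
    using assms(4,5) by (simp add: H.m_comm[of "h g" "h x"] H.m_assoc)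
  finally show ?thesis using assms(4,5) by simp
qed

text \<open>Homomorphisms to an abelian group do not see inner automorphisms, so \<open>hom_act\<close> does not
  depend on the choice of representative.\<close>

lemma hom_out_class:
  assumes f: "f \<in> hom (FG n) (ZP p)" and \<Phi>: "\<Phi> \<in> out_class n \<Phi>0" and \<Phi>0: "\<Phi>0 \<in> Aut n"
    and w: "w \<in> carrier (FG n)"
  shows "f (\<Phi> w) = f (\<Phi>0 w)"
proof -
  obtain g where "g \<in> carrier (FG n)"
    "\<Phi> w = g \<otimes>\<^bsub>FG n\<^esub> \<Phi>0 w \<otimes>\<^bsub>FG n\<^esub> inv\<^bsub>FG n\<^esub> g"
    using out_classE[OF \<Phi>] w by metis
  then show ?thesis
    using hom_conj_comm_group[OF f group_free abelian_integer_mod_group _ Aut_carrier[OF \<Phi>0 w]] by simp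
qed

lemma hom_act_out_class:
  assumes f: "f \<in> hom (FG n) (ZP p)" and \<Phi>0: "\<Phi>0 \<in> auto (FG n)"
  shows "hom_act n (out_class n \<Phi>0) f = hom_aut_act n \<Phi>0 f"
  unfolding hom_act_def hom_aut_act_def
  using hom_out_class[OF f out_rep_out_class[OF auto_Aut[OF \<Phi>0]] auto_Aut[OF \<Phi>0]]
  by (intro restrict_ext) simp

lemma hom_act_nontriv_homs:
  assumes "\<phi> \<in> Out n" "f \<in> nontriv_homs n p"
  shows "hom_act n \<phi> f \<in> nontriv_homs n p"
proof -
  obtain \<Phi> where "\<Phi> \<in> auto (FG n)" "\<phi> = out_class n \<Phi>"
    using assms(1) Out_eq_auto_image by blast
  moreover have "f \<in> hom (FG n) (ZP p)" using assms(2) by (simp add: nontriv_homs_def)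
  ultimately show ?thesis
    using hom_act_out_class hom_aut_act_nontriv_homs[OF assms(2)] by simp
qed

section \<open>Cosets of a kernel\<close>

lemma (in group_hom) l_coset_kernel:
  assumes "t \<in> carrier G"
  shows "t <#\<^bsub>G\<^esub> kernel G H h = {w \<in> carrier G. h w = h t}"
proof (intro equalityI subsetI)
  fix w assume "w \<in> t <#\<^bsub>G\<^esub> kernel G H h"
  then obtain k where "k \<in> carrier G" "h k = \<one>\<^bsub>H\<^esub>" "w = t \<otimes>\<^bsub>G\<^esub> k"
    by (auto simp: l_coset_def kernel_def)
  then show "w \<in> {w \<in> carrier G. h w = h t}" using assms by simp
next
  fix w assume w: "w \<in> {w \<in> carrier G. h w = h t}"
  then have "inv\<^bsub>G\<^esub> t \<otimes>\<^bsub>G\<^esub> w \<in> kernel G H h"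
    using assms by (simp add: kernel_def H.l_inv)
  moreover have "w = t \<otimes>\<^bsub>G\<^esub> (inv\<^bsub>G\<^esub> t \<otimes>\<^bsub>G\<^esub> w)"
    using w assms by (simp add: G.m_assoc[symmetric])
  ultimately show "w \<in> t <#\<^bsub>G\<^esub> kernel G H h"
    unfolding l_coset_def by blast
qed

lemma (in group_hom) r_coset_kernel:
  assumes "t \<in> carrier G"
  shows "kernel G H h #>\<^bsub>G\<^esub> t = {w \<in> carrier G. h w = h t}"
proof (intro equalityI subsetI)
  fix w assume "w \<in> kernel G H h #>\<^bsub>G\<^esub> t"
  then obtain k where "k \<in> carrier G" "h k = \<one>\<^bsub>H\<^esub>" "w = k \<otimes>\<^bsub>G\<^esub> t"
    by (auto simp: r_coset_def kernel_def)
  then show "w \<in> {w \<in> carrier G. h w = h t}" using assms by simp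
next
  fix w assume w: "w \<in> {w \<in> carrier G. h w = h t}"
  then have "w \<otimes>\<^bsub>G\<^esub> inv\<^bsub>G\<^esub> t \<in> kernel G H h"
    using assms by (simp add: kernel_def H.r_inv)
  moreover have "w = (w \<otimes>\<^bsub>G\<^esub> inv\<^bsub>G\<^esub> t) \<otimes>\<^bsub>G\<^esub> t"
    using w assms by (simp add: G.m_assoc)
  ultimately show "w \<in> kernel G H h #>\<^bsub>G\<^esub> t"
    unfolding r_coset_def by blast
qed

lemma bij_image_level_set:
  assumes "bij_betw \<Phi> D D" "\<forall>w\<in>D. f (\<Phi> w) = f w"
  shows "\<Phi> ` {w \<in> D. f w = c} = {w \<in> D. f w = c}"
proof
  show "\<Phi> ` {w \<in> D. f w = c} \<subseteq> {w \<in> D. f w = c}"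
    using assms by (auto simp: bij_betw_def)
  show "{w \<in> D. f w = c} \<subseteq> \<Phi> ` {w \<in> D. f w = c}"
  proof
    fix w assume w: "w \<in> {w \<in> D. f w = c}"
    then have "w \<in> \<Phi> ` D" using bij_betw_imp_surj_on[OF assms(1)] by simp
    then obtain u where "u \<in> D" "w = \<Phi> u" by blast
    then show "w \<in> \<Phi> ` {w \<in> D. f w = c}" using w assms(2) by auto
  qed
qed

lemma (in group_hom) preserves_l_cosets_kernel_iff:
  assumes "bij_betw \<Phi> (carrier G) (carrier G)"
  shows "(\<Phi> ` kernel G H h = kernel G H h \<and>
      (\<forall>t\<in>carrier G. \<Phi> ` (t <#\<^bsub>G\<^esub> kernel G H h) = t <#\<^bsub>G\<^esub> kernel G H h))
    \<longleftrightarrow> (\<forall>w\<in>carrier G. h (\<Phi> w) = h w)"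
proof
  assume "\<forall>w\<in>carrier G. h (\<Phi> w) = h w"
  then have "\<Phi> ` {w \<in> carrier G. h w = c} = {w \<in> carrier G. h w = c}" for c
    by (rule bij_image_level_set[OF assms])
  then show "\<Phi> ` kernel G H h = kernel G H h \<and>
      (\<forall>t\<in>carrier G. \<Phi> ` (t <#\<^bsub>G\<^esub> kernel G H h) = t <#\<^bsub>G\<^esub> kernel G H h)"
    by (simp add: l_coset_kernel) (simp add: kernel_def)
next
  assume cosets: "\<Phi> ` kernel G H h = kernel G H h \<and>
      (\<forall>t\<in>carrier G. \<Phi> ` (t <#\<^bsub>G\<^esub> kernel G H h) = t <#\<^bsub>G\<^esub> kernel G H h)"
  show "\<forall>w\<in>carrier G. h (\<Phi> w) = h w"
  proof
    fix w assume w: "w \<in> carrier G"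
    then have "\<Phi> w \<in> \<Phi> ` {u \<in> carrier G. h u = h w}" by blast
    also have "\<Phi> ` {u \<in> carrier G. h u = h w} = {u \<in> carrier G. h u = h w}"
      using cosets w by (simp add: l_coset_kernel)
    finally show "h (\<Phi> w) = h w" by simp
  qed
qed

lemma kernel_integer_mod_group: "kernel G (ZP p) f = {w \<in> carrier G. f w = 0}"
  by (simp add: kernel_def)

lemma group_hom_free_ZP: "f \<in> hom (FG n) (ZP p) \<Longrightarrow> group_hom (FG n) (ZP p) f"
  by (simp add: group_hom_def group_hom_axioms_def group_free)

lemma hom_act_fixed_iff:
  assumes f: "f \<in> hom (FG n) (ZP p)" "f \<in> extensional (carrier (FG n))" and \<Phi>0: "\<Phi>0 \<in> auto (FG n)"
  shows "hom_act n (out_class n \<Phi>0) f = f \<longleftrightarrow> (\<forall>w\<in>carrier (FG n). f (\<Phi>0 w) = f w)"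
proof -
  have "restrict (f \<circ> \<Phi>0) (carrier (FG n)) = f \<longleftrightarrow> (\<forall>w\<in>carrier (FG n). f (\<Phi>0 w) = f w)"
  proof
    assume "\<forall>w\<in>carrier (FG n). f (\<Phi>0 w) = f w"
    then show "restrict (f \<circ> \<Phi>0) (carrier (FG n)) = f"
      by (intro extensionalityI[OF restrict_extensional f(2)]) simp
  qed (metis comp_apply restrict_apply')
  then show ?thesis unfolding hom_act_out_class[OF f(1) \<Phi>0] hom_aut_act_def .
qed

theorem coset_stab_eq_hom_stabiliser:
  assumes f: "f \<in> hom (FG n) (ZP p)" "f \<in> extensional (carrier (FG n))"
    and N: "N = {w \<in> carrier (FG n). f w = 0}"
  shows "coset_stab n N = {\<phi> \<in> Out n. hom_act n \<phi> f = f}"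
proof -
  interpret f: group_hom "FG n" "ZP p" f by (rule group_hom_free_ZP[OF f(1)])
  have N_kernel: "N = kernel (FG n) (ZP p) f" by (simp add: N kernel_integer_mod_group)
  have "\<phi> \<in> coset_stab n N \<longleftrightarrow> hom_act n \<phi> f = f" if \<phi>: "\<phi> \<in> Out n" for \<phi>
  proof -
    obtain \<Phi>0 where \<Phi>0: "\<Phi>0 \<in> auto (FG n)" "\<phi> = out_class n \<Phi>0"
      using \<phi> unfolding Out_eq_auto_image by blast
    have "\<phi> \<in> coset_stab n N \<longleftrightarrow> (\<forall>\<Phi>\<in>\<phi>. \<Phi> ` N = N \<and>
        (\<forall>t\<in>carrier (FG n). \<Phi> ` (t <#\<^bsub>FG n\<^esub> N) = t <#\<^bsub>FG n\<^esub> N))"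
      using \<phi> by (simp add: coset_stab_def)
    also have "\<dots> \<longleftrightarrow> (\<forall>\<Phi>\<in>\<phi>. \<forall>w\<in>carrier (FG n). f (\<Phi> w) = f w)"
    proof (intro ball_cong refl)
      fix \<Phi> assume "\<Phi> \<in> \<phi>"
      then have "\<Phi> \<in> Aut n" using \<Phi>0(2) by (simp add: out_class_def)
      then have "bij_betw \<Phi> (carrier (FG n)) (carrier (FG n))" by (simp add: Aut_def iso_def)
      then show "(\<Phi> ` N = N \<and> (\<forall>t\<in>carrier (FG n). \<Phi> ` (t <#\<^bsub>FG n\<^esub> N) = t <#\<^bsub>FG n\<^esub> N))
          \<longleftrightarrow> (\<forall>w\<in>carrier (FG n). f (\<Phi> w) = f w)"
        unfolding N_kernel by (rule f.preserves_l_cosets_kernel_iff)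
    qed
    also have "\<dots> \<longleftrightarrow> (\<forall>w\<in>carrier (FG n). f (\<Phi>0 w) = f w)"
    proof
      assume "\<forall>\<Phi>\<in>\<phi>. \<forall>w\<in>carrier (FG n). f (\<Phi> w) = f w"
      then show "\<forall>w\<in>carrier (FG n). f (\<Phi>0 w) = f w"
        using self_out_class[OF auto_Aut[OF \<Phi>0(1)]] \<Phi>0(2) by blast
    next
      assume "\<forall>w\<in>carrier (FG n). f (\<Phi>0 w) = f w"
      then show "\<forall>\<Phi>\<in>\<phi>. \<forall>w\<in>carrier (FG n). f (\<Phi> w) = f w"
        using hom_out_class[OF f(1) _ auto_Aut[OF \<Phi>0(1)]] \<Phi>0(2) by simp
    qed
    also have "\<dots> \<longleftrightarrow> hom_act n \<phi> f = f"
      using hom_act_fixed_iff[OF f \<Phi>0(1)] \<Phi>0(2) by simp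
    finally show ?thesis .
  qed
  moreover have "coset_stab n N \<subseteq> Out n" by (auto simp: coset_stab_def)
  ultimately show ?thesis by blast
qed

section \<open>Homomorphisms to \<open>\<int>/p\<close> versus index \<open>p\<close> subgroups with a marked coset\<close>

definition fibre_pair :: "nat \<Rightarrow> (word \<Rightarrow> int) \<Rightarrow> word set \<times> word set" where
  "fibre_pair n f = ({w \<in> carrier (FG n). f w = 0}, {w \<in> carrier (FG n). f w = 1})"

lemma pair_act_fibre_pair:
  assumes "\<phi> \<in> Out n"
  shows "pair_act n \<phi> (fibre_pair n f) = fibre_pair n (hom_act n \<phi> f)"
  using Aut_carrier[OF out_rep_Aut[OF assms]]
  by (auto simp: pair_act_def fibre_pair_def hom_act_def Let_def)

lemma hom_pow_of_preimage_one:
  assumes "f \<in> hom (FG n) (ZP p)" "t \<in> carrier (FG n)" "f t = 1" "c \<in> {0..<int p}"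
  shows "f (t [^]\<^bsub>FG n\<^esub> nat c) = c"
proof -
  have "f (t [^]\<^bsub>FG n\<^esub> nat c) = f t [^]\<^bsub>ZP p\<^esub> nat c"
    by (rule hom_nat_pow[OF assms(1,2) group_free group_integer_mod_group])
  then show ?thesis using assms(3,4) by simp
qed

lemma nontriv_homs_surj:
  assumes p: "Factorial_Ring.prime p" and f: "f \<in> nontriv_homs n p"
  shows "f ` carrier (FG n) = carrier (ZP p)"
proof -
  have p0: "p > 0" using p prime_gt_0_nat by blast
  have fh: "f \<in> hom (FG n) (ZP p)" using f by (simp add: nontriv_homs_def)
  obtain w0 where w0: "w0 \<in> carrier (FG n)" "f w0 \<noteq> 0" using f by (auto simp: nontriv_homs_def)
  have "f w0 \<in> {0..<int p}"
    using hom_in_carrier[OF fh w0(1)] p0 by (simp add: carrier_integer_mod_group)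
  then have unit: "f w0 mod int p \<noteq> 0" using w0(2) by simp
  have "c \<in> f ` carrier (FG n)" if c: "c \<in> {0..<int p}" for c
  proof -
    obtain m :: nat where m: "(0 + int m * f w0) mod int p = c mod int p"
      using exists_mult_mod_eq[OF p unit] by blast
    have "f (w0 [^]\<^bsub>FG n\<^esub> m) = c"
      using hom_nat_pow[OF fh w0(1) group_free group_integer_mod_group] m c by simp
    moreover have "w0 [^]\<^bsub>FG n\<^esub> m \<in> carrier (FG n)"
      using w0(1) by (simp add: group.is_monoid[OF group_free] monoid.nat_pow_closed)
    ultimately show ?thesis by blast
  qed
  then show ?thesis
    using hom_carrier[OF fh] p0 by (auto simp: carrier_integer_mod_group)
qed

lemma nontriv_homs_preimage_one:
  assumes "Factorial_Ring.prime p" "f \<in> nontriv_homs n p"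
  obtains t where "t \<in> carrier (FG n)" "f t = 1"
proof -
  have "p \<noteq> 1" using prime_gt_1_nat[OF assms(1)] by simp
  then have "1 \<in> f ` carrier (FG n)"
    unfolding nontriv_homs_surj[OF assms] by (rule integer_mod_group_1[THEN iffD2])
  then show ?thesis using that by (auto simp only: image_iff)
qed

lemma (in group_hom) card_rcosets_kernel:
  assumes "h ` carrier G = carrier H"
  shows "card (rcosets\<^bsub>G\<^esub> kernel G H h) = card (carrier H)"
proof -
  have "bij_betw (\<lambda>Y. the_elem (h ` Y)) (carrier (G Mod kernel G H h)) (carrier H)"
    using FactGroup_iso_set[OF assms] by (simp add: iso_def)
  then show ?thesis by (simp add: bij_betw_same_card FactGroup_def)
qed

lemma fibre_pair_mem_index_p_pairs:
  assumes p: "Factorial_Ring.prime p" and f: "f \<in> nontriv_homs n p"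
  shows "fibre_pair n f \<in> index_p_pairs n p"
proof -
  have p1: "p > 1" using p prime_gt_1_nat by blast
  interpret f: group_hom "FG n" "ZP p" f
    using f by (simp add: group_hom_free_ZP nontriv_homs_def)
  define K where "K = kernel (FG n) (ZP p) f"
  have surj: "f ` carrier (FG n) = carrier (ZP p)" by (rule nontriv_homs_surj[OF p f])
  then have "card (rcosets\<^bsub>FG n\<^esub> K) = p"
    unfolding K_def using f.card_rcosets_kernel p1 by (simp add: carrier_integer_mod_group)
  moreover obtain t where t: "t \<in> carrier (FG n)" "f t = 1"
    using nontriv_homs_preimage_one[OF p f] .
  then have "{w \<in> carrier (FG n). f w = 1} = K #>\<^bsub>FG n\<^esub> t"
    unfolding K_def using f.r_coset_kernel by simp
  moreover have "K #>\<^bsub>FG n\<^esub> t \<in> rcosets\<^bsub>FG n\<^esub> K"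
    using t(1) f.subgroup_kernel by (simp add: K_def f.G.rcosetsI subgroup.subset)
  moreover have "{w \<in> carrier (FG n). f w = 1} \<noteq> K" using t by (auto simp: K_def kernel_def)
  ultimately show ?thesis using f.normal_kernel
    by (auto simp: index_p_pairs_def fibre_pair_def K_def kernel_integer_mod_group)
qed

text \<open>With \<open>f t = g t = 1\<close>, every \<open>w\<close> lies in the coset \<open>ker f \<cdot> t\<^sup>f\<^sup>(\<^sup>w\<^sup>)\<close> of the common kernel.\<close>

lemma inj_on_fibre_pair:
  assumes p: "Factorial_Ring.prime p"
  shows "inj_on (fibre_pair n) (nontriv_homs n p)"
proof (rule inj_onI)
  fix f g assume f: "f \<in> nontriv_homs n p" and g: "g \<in> nontriv_homs n p"
    and eq: "fibre_pair n f = fibre_pair n g"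
  have p0: "p > 0" using p prime_gt_0_nat by blast
  interpret f: group_hom "FG n" "ZP p" f
    using f by (simp add: group_hom_free_ZP nontriv_homs_def)
  interpret g: group_hom "FG n" "ZP p" g
    using g by (simp add: group_hom_free_ZP nontriv_homs_def)
  have kernel: "kernel (FG n) (ZP p) f = kernel (FG n) (ZP p) g"
    using eq by (simp add: fibre_pair_def kernel_integer_mod_group)
  obtain t where t: "t \<in> carrier (FG n)" "f t = 1"
    using nontriv_homs_preimage_one[OF p f] .
  then have gt: "g t = 1" using eq by (auto simp: fibre_pair_def)
  show "f = g"
  proof (rule extensionalityI)
    show "f \<in> extensional (carrier (FG n))" "g \<in> extensional (carrier (FG n))"
      using f g by (simp_all add: nontriv_homs_def)
  next
    fix w assume w: "w \<in> carrier (FG n)"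
    define u where "u = t [^]\<^bsub>FG n\<^esub> nat (f w)"
    have fw: "f w \<in> {0..<int p}" using f.hom_closed[OF w] p0 by (simp add: carrier_integer_mod_group)
    have u: "u \<in> carrier (FG n)" "f u = f w" "g u = f w"
      using t gt fw hom_pow_of_preimage_one[OF f.homh] hom_pow_of_preimage_one[OF g.homh]
      by (simp_all add: u_def)
    then have "w \<in> kernel (FG n) (ZP p) f #>\<^bsub>FG n\<^esub> u" using w f.r_coset_kernel by simp
    then show "f w = g w" using kernel g.r_coset_kernel[OF u(1)] u(3) by simp
  qed
qed

lemma (in group) int_pow_iso_integer_mod_group:
  assumes p: "Factorial_Ring.prime (order G)" and c: "c \<in> carrier G" "c \<noteq> \<one>"
  shows "(\<lambda>k. c [^] (k::int)) \<in> iso (ZP (order G)) G"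
proof -
  let ?p = "order G" and ?\<psi> = "\<lambda>k. c [^] (k::int)"
  have "finite (carrier G)" using p by (metis order_def card.infinite not_prime_0)
  then have "ord c dvd ?p" using ord_dvd_group_order[OF c(1)] by simp
  then have "ord c = ?p" using p ord_eq_1[OF c(1)] c(2) by (auto simp: prime_nat_iff)
  then have \<psi>_eq: "?\<psi> a = ?\<psi> b \<longleftrightarrow> int ?p dvd (b - a)" for a b
    using int_pow_eq[OF c(1)] by simp
  have "?\<psi> \<in> hom (ZP ?p) G"
  proof (rule homI)
    fix a b
    have "?\<psi> ((a + b) mod int ?p) = ?\<psi> (a + b)" unfolding \<psi>_eq by (simp add: mod_eq_dvd_iff[symmetric])
    then show "?\<psi> (a \<otimes>\<^bsub>ZP ?p\<^esub> b) = ?\<psi> a \<otimes> ?\<psi> b" using int_pow_mult[OF c(1)] by simp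
  qed (simp add: c)
  moreover have inj: "inj_on ?\<psi> {0..<int ?p}"
    by (rule inj_onI) (simp add: \<psi>_eq mod_eq_dvd_iff[symmetric])
  moreover have "?\<psi> ` {0..<int ?p} = carrier G"
    using inj \<open>finite (carrier G)\<close> c(1)
    by (intro card_subset_eq) (auto simp: card_image order_def)
  ultimately show ?thesis
    using p by (simp add: iso_def bij_betw_def carrier_integer_mod_group prime_gt_0_nat)
qed

lemma (in group) r_coset_fibre:
  assumes "subgroup H G" "c \<in> carrier G"
  shows "{w \<in> carrier G. H #> w = H #> c} = H #> c"
proof
  show "{w \<in> carrier G. H #> w = H #> c} \<subseteq> H #> c"
    using rcos_self[OF _ assms(1)] by blast
  show "H #> c \<subseteq> {w \<in> carrier G. H #> w = H #> c}"
    using assms repr_independence r_coset_subset_G[OF subgroup.subset] by blast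
qed

text \<open>Conversely a pair \<open>(N', C)\<close> gives the homomorphism \<open>F\<^sub>n \<rightarrow> F\<^sub>n/N' \<cong> \<int>/p\<close>, the isomorphism
  sending \<open>1\<close> to \<open>C\<close>.\<close>

lemma fibre_pair_surj:
  assumes p: "Factorial_Ring.prime p" and P: "(N', C) \<in> index_p_pairs n p"
  shows "\<exists>f\<in>nontriv_homs n p. fibre_pair n f = (N', C)"
proof -
  have p1: "p > 1" using p prime_gt_1_nat by blast
  have norm: "N' \<lhd> FG n" and card: "card (rcosets\<^bsub>FG n\<^esub> N') = p"
    and C: "C \<in> rcosets\<^bsub>FG n\<^esub> N'" and CN: "C \<noteq> N'"
    using P by (auto simp: index_p_pairs_def)
  interpret F: group "FG n" by (rule group_free)
  interpret N: normal N' "FG n" by (rule norm)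
  define Q where "Q = FG n Mod N'"
  interpret Q: group Q unfolding Q_def by (rule N.factorgroup_is_group)
  have order_Q: "order Q = p" using card by (simp add: Q_def FactGroup_def order_def)
  have C_Q: "C \<in> carrier Q" "C \<noteq> \<one>\<^bsub>Q\<^esub>" using C CN by (simp_all add: Q_def FactGroup_def)
  define \<psi> where "\<psi> k = C [^]\<^bsub>Q\<^esub> (k::int)" for k
  have \<psi>: "\<psi> \<in> iso (ZP p) Q"
    using Q.int_pow_iso_integer_mod_group[OF _ C_Q] p order_Q by (simp add: \<psi>_def[abs_def])
  define \<psi>' where "\<psi>' = inv_into (carrier (ZP p)) \<psi>"
  have \<psi>': "\<psi>' \<in> iso Q (ZP p)"
    unfolding \<psi>'_def by (rule group.iso_set_sym[OF group_integer_mod_group \<psi>])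
  have \<psi>'_eq: "\<psi>' Y = k \<longleftrightarrow> Y = \<psi> k" if "Y \<in> carrier Q" "k \<in> {0..<int p}" for Y k
    using that \<psi> p1 unfolding \<psi>'_def iso_def bij_betw_def
    by (auto simp: carrier_integer_mod_group f_inv_into_f inv_into_f_f)
  define f where "f = restrict (\<lambda>w. \<psi>' (N' #>\<^bsub>FG n\<^esub> w)) (carrier (FG n))"
  have f_hom: "f \<in> hom (FG n) (ZP p)"
    using hom_compose[OF N.r_coset_hom_Mod[folded Q_def] iso_imp_homomorphism[OF \<psi>']]
    unfolding f_def by (rule F.hom_restrict) simp
  have fibre: "{w \<in> carrier (FG n). f w = k} = N' #>\<^bsub>FG n\<^esub> c"
    if "k \<in> {0..<int p}" "c \<in> carrier (FG n)" "N' #>\<^bsub>FG n\<^esub> c = \<psi> k" for k c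
  proof -
    have "N' #>\<^bsub>FG n\<^esub> w \<in> carrier Q" if "w \<in> carrier (FG n)" for w
      using that by (simp add: Q_def FactGroup_def F.rcosetsI N.subset)
    then have "{w \<in> carrier (FG n). f w = k} = {w \<in> carrier (FG n). N' #>\<^bsub>FG n\<^esub> w = N' #>\<^bsub>FG n\<^esub> c}"
      using \<psi>'_eq that by (auto simp: f_def)
    then show ?thesis using F.r_coset_fibre[OF N.subgroup_axioms that(2)] by simp
  qed
  have "{w \<in> carrier (FG n). f w = 0} = N'"
    using fibre[of 0 "\<one>\<^bsub>FG n\<^esub>"] p1 N.subset by (simp add: \<psi>_def Q_def)
  moreover obtain c where c: "c \<in> carrier (FG n)" "C = N' #>\<^bsub>FG n\<^esub> c"
    using C by (auto simp: RCOSETS_def)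
  then have "{w \<in> carrier (FG n). f w = 1} = C"
    using fibre[of 1 c] p1 C_Q(1) by (simp add: \<psi>_def)
  moreover have "f c = 1" using calculation(2) c F.rcos_self[OF c(1) N.subgroup_axioms] by blast
  then have "f \<in> nontriv_homs n p" using f_hom c(1) by (force simp: nontriv_homs_def f_def)
  ultimately show ?thesis by (auto simp: fibre_pair_def)
qed

lemma fibre_pair_image:
  assumes "Factorial_Ring.prime p"
  shows "fibre_pair n ` nontriv_homs n p = index_p_pairs n p"
proof
  show "fibre_pair n ` nontriv_homs n p \<subseteq> index_p_pairs n p"
    using fibre_pair_mem_index_p_pairs[OF assms] by blast
  show "index_p_pairs n p \<subseteq> fibre_pair n ` nontriv_homs n p"
  proof
    fix P assume "P \<in> index_p_pairs n p"
    then show "P \<in> fibre_pair n ` nontriv_homs n p"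
      using fibre_pair_surj[OF assms, of "fst P" "snd P"] by (metis imageI prod.collapse)
  qed
qed

section \<open>Equivalence of marked graphs\<close>

definition mg_iso :: "nat \<Rightarrow> mgraph \<Rightarrow> mgraph \<Rightarrow> (nat \<Rightarrow> nat) \<Rightarrow> (letter \<Rightarrow> letter) \<Rightarrow> word \<Rightarrow> bool" where
  "mg_iso n g g' hv he \<gamma> = (case g of (V, E, src, len, v0, m) \<Rightarrow> case g' of (V', E', src', len', v0', m') \<Rightarrow>
     bij_betw hv V V' \<and> bij_betw he (E \<times> UNIV) (E' \<times> UNIV) \<and>
     (\<forall>d\<in>E \<times> UNIV. he (flip d) = flip (he d) \<and> src' (he d) = hv (src d) \<and> len' (fst (he d)) = len (fst d)) \<and>
     is_path E' src' (hv v0) \<gamma> v0' \<and>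
     (\<forall>w\<in>carrier (FG n). m' w = reduce (inv_w \<gamma> @ map he (m w) @ \<gamma>)))"

lemma mg_equiv_iff:
  "mg_equiv n g g' \<longleftrightarrow> valid_mgraph n g \<and> valid_mgraph n g' \<and> (\<exists>hv he \<gamma>. mg_iso n g g' hv he \<gamma>)"
  by (cases g; cases g') (simp add: mg_equiv_def mg_iso_def inv_w_def)

lemma valid_mgraph_marking:
  assumes "valid_mgraph n (V, E, src, len, v0, m)" "w \<in> carrier (FG n)"
  shows "is_path E src v0 (m w) v0" "reduced (m w)"
proof -
  have "m \<in> hom (FG n) (pi1 E src v0)" using assms(1) by (simp add: valid_mgraph_def iso_def)
  then have "m w \<in> carrier (pi1 E src v0)" using assms(2) by (rule hom_in_carrier)
  then show "is_path E src v0 (m w) v0" "reduced (m w)" by (simp_all add: carrier_pi1)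
qed

lemma valid_mgraph_src:
  "valid_mgraph n (V, E, src, len, v0, m) \<Longrightarrow> d \<in> E \<times> UNIV \<Longrightarrow> src d \<in> V"
  by (cases d) (auto simp: valid_mgraph_def metric_graph_def)

lemma valid_mgraph_cong:
  assumes "valid_mgraph n (V, E, src, len, v0, m)" "\<And>w. w \<in> carrier (FG n) \<Longrightarrow> m' w = m w"
  shows "valid_mgraph n (V, E, src, len, v0, m')"
  using assms group.iso_eq[OF group_free, of m] by (auto simp: valid_mgraph_def)

lemma mg_iso_same_graph:
  assumes "valid_mgraph n (V, E, src, len, v0, m)" "\<And>w. w \<in> carrier (FG n) \<Longrightarrow> m' w = m w"
  shows "mg_iso n (V, E, src, len, v0, m) (V, E, src, len, v0, m') id id []"
  using assms valid_mgraph_marking(2)[OF assms(1)] by (simp add: mg_iso_def reduce_reduced)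

lemma map_reduce_conj:
  assumes "inj_on h S" "\<forall>d\<in>S. flip d \<in> S \<and> h (flip d) = flip (h d)" "set \<gamma> \<subseteq> S" "set x \<subseteq> S"
  shows "map h (reduce (inv_w \<gamma> @ x @ \<gamma>)) = reduce (inv_w (map h \<gamma>) @ map h x @ map h \<gamma>)"
proof -
  have "set (inv_w \<gamma>) \<subseteq> S" using assms(2,3) by (auto simp: set_inv_w)
  then have "map h (reduce (inv_w \<gamma> @ x @ \<gamma>)) = reduce (map h (inv_w \<gamma>) @ map h x @ map h \<gamma>)"
    using map_reduce[OF assms(1,2)] assms(3,4) by simp
  also have "map h (inv_w \<gamma>) = inv_w (map h \<gamma>)"
    using assms(2,3) by (intro map_inv_w) blast
  finally show ?thesis .
qed

lemma reduce_conj_map_inverse: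
  assumes "inj_on h S" "\<forall>d\<in>S. flip d \<in> S \<and> h (flip d) = flip (h d)" "set \<gamma> \<subseteq> S" "set y \<subseteq> S"
    and "map h y = x" "reduced x"
  shows "reduce (map h \<gamma> @ map h (reduce (inv_w \<gamma> @ y @ \<gamma>)) @ inv_w (map h \<gamma>)) = x"
proof -
  have "reduce (map h \<gamma> @ map h (reduce (inv_w \<gamma> @ y @ \<gamma>)) @ inv_w (map h \<gamma>))
      = reduce (map h \<gamma> @ inv_w (map h \<gamma>) @ x @ map h \<gamma> @ inv_w (map h \<gamma>))"
    using map_reduce_conj[OF assms(1-4)] assms(5) by (simp add: reduce_mid)
  also have "\<dots> = x"
    using reduce_cancel[of "map h \<gamma>"] reduce_cancel_right[of x "inv_w (map h \<gamma>)"] assms(6)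
    by (simp add: reduce_reduced)
  finally show ?thesis .
qed

lemma mg_iso_comp:
  assumes v: "valid_mgraph n (V, E, src, len, v0, m)"
    and iso1: "mg_iso n (V, E, src, len, v0, m) (V', E', src', len', v0', m') hv1 he1 \<gamma>1"
    and iso2: "mg_iso n (V', E', src', len', v0', m') (V'', E'', src'', len'', v0'', m'') hv2 he2 \<gamma>2"
  shows "mg_iso n (V, E, src, len, v0, m) (V'', E'', src'', len'', v0'', m'')
    (hv2 \<circ> hv1) (he2 \<circ> he1) (map he2 \<gamma>1 @ \<gamma>2)"
proof -
  have hv1: "bij_betw hv1 V V'" and hv2: "bij_betw hv2 V' V''"
    and he1: "bij_betw he1 (E \<times> UNIV) (E' \<times> UNIV)" and he2: "bij_betw he2 (E' \<times> UNIV) (E'' \<times> UNIV)"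
    and path1: "is_path E' src' (hv1 v0) \<gamma>1 v0'"
    and marking1: "\<forall>w\<in>carrier (FG n). m' w = reduce (inv_w \<gamma>1 @ map he1 (m w) @ \<gamma>1)"
    and marking2: "\<forall>w\<in>carrier (FG n). m'' w = reduce (inv_w \<gamma>2 @ map he2 (m' w) @ \<gamma>2)"
    using iso1 iso2 by (simp_all add: mg_iso_def)
  have c1: "\<forall>d\<in>E \<times> UNIV. he1 (flip d) = flip (he1 d) \<and> src' (he1 d) = hv1 (src d) \<and> len' (fst (he1 d)) = len (fst d)"
    using iso1 unfolding mg_iso_def prod.case by blast
  have c2: "\<forall>d\<in>E' \<times> UNIV. he2 (flip d) = flip (he2 d) \<and> src'' (he2 d) = hv2 (src' d) \<and> len'' (fst (he2 d)) = len' (fst d)"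
    using iso2 unfolding mg_iso_def prod.case by blast
  have c: "\<forall>d\<in>E \<times> UNIV. (he2 \<circ> he1) (flip d) = flip ((he2 \<circ> he1) d) \<and>
      src'' ((he2 \<circ> he1) d) = (hv2 \<circ> hv1) (src d) \<and> len'' (fst ((he2 \<circ> he1) d)) = len (fst d)"
  proof
    fix d :: letter assume d: "d \<in> E \<times> UNIV"
    then have "he1 d \<in> E' \<times> UNIV" using bij_betwE[OF he1] by blast
    then show "(he2 \<circ> he1) (flip d) = flip ((he2 \<circ> he1) d) \<and>
      src'' ((he2 \<circ> he1) d) = (hv2 \<circ> hv1) (src d) \<and> len'' (fst ((he2 \<circ> he1) d)) = len (fst d)"
      using bspec[OF c1 d] bspec[OF c2] by simp
  qed
  have flip2: "\<forall>d\<in>E' \<times> UNIV. flip d \<in> E' \<times> UNIV \<and> he2 (flip d) = flip (he2 d)"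
    using c2 flip_mem_Times by blast
  have "is_path E'' src'' (hv2 (hv1 v0)) (map he2 \<gamma>1) (hv2 v0')"
    using c2 bij_betw_imp_surj_on[OF he2] path1 by (intro is_path_map) auto
  then have path: "is_path E'' src'' ((hv2 \<circ> hv1) v0) (map he2 \<gamma>1 @ \<gamma>2) v0''"
    using iso2 by (auto simp: mg_iso_def is_path_append)
  have marking: "m'' w = reduce (inv_w (map he2 \<gamma>1 @ \<gamma>2) @ map (he2 \<circ> he1) (m w) @ map he2 \<gamma>1 @ \<gamma>2)"
    if w: "w \<in> carrier (FG n)" for w
  proof -
    have "set (map he1 (m w)) \<subseteq> E' \<times> UNIV"
      unfolding set_map using is_path_set[OF valid_mgraph_marking(1)[OF v w]] bij_betwE[OF he1]
      by blast
    then have "map he2 (m' w) = reduce (inv_w (map he2 \<gamma>1) @ map (he2 \<circ> he1) (m w) @ map he2 \<gamma>1)"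
      using map_reduce_conj[OF _ flip2 is_path_set[OF path1]] he2 marking1 w
      by (simp add: bij_betw_def)
    then show ?thesis using marking2 w by (simp add: reduce_mid)
  qed
  show ?thesis unfolding mg_iso_def prod.case
    using bij_betw_trans[OF hv1 hv2] bij_betw_trans[OF he1 he2] c path marking by blast
qed

lemma inv_into_edge_map:
  assumes v: "valid_mgraph n (V, E, src, len, v0, m)"
    and hv: "bij_betw hv V V'" and he: "bij_betw he (E \<times> UNIV) (E' \<times> UNIV)"
    and c: "\<forall>d\<in>E \<times> UNIV. he (flip d) = flip (he d) \<and> src' (he d) = hv (src d) \<and> len' (fst (he d)) = len (fst d)"
    and d: "d \<in> E' \<times> UNIV"
  defines "he' \<equiv> inv_into (E \<times> UNIV) he"
  shows "he' (flip d) = flip (he' d) \<and> src (he' d) = inv_into V hv (src' d) \<and> len (fst (he' d)) = len' (fst d)"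
proof -
  have d': "he' d \<in> E \<times> UNIV" "he (he' d) = d"
    using he d by (auto simp: he'_def bij_betw_def inv_into_into f_inv_into_f)
  then have "he (flip (he' d)) = flip d" "src' d = hv (src (he' d))" "len' (fst d) = len (fst (he' d))"
    using c by auto
  moreover have "he' (he (flip (he' d))) = flip (he' d)"
    using he flip_mem_Times[OF d'(1)] by (simp add: he'_def bij_betw_def inv_into_f_f)
  moreover have "inv_into V hv (hv (src (he' d))) = src (he' d)"
    using hv valid_mgraph_src[OF v d'(1)] by (simp add: bij_betw_def inv_into_f_f)
  ultimately show ?thesis by simp
qed

lemma mg_iso_inverse:
  assumes v: "valid_mgraph n (V, E, src, len, v0, m)"
    and iso: "mg_iso n (V, E, src, len, v0, m) (V', E', src', len', v0', m') hv he \<gamma>"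
  defines "he' \<equiv> inv_into (E \<times> UNIV) he"
  shows "mg_iso n (V', E', src', len', v0', m') (V, E, src, len, v0, m)
    (inv_into V hv) he' (inv_w (map he' \<gamma>))"
proof -
  have hv: "bij_betw hv V V'" and he: "bij_betw he (E \<times> UNIV) (E' \<times> UNIV)"
    and c: "\<forall>d\<in>E \<times> UNIV. he (flip d) = flip (he d) \<and> src' (he d) = hv (src d) \<and> len' (fst (he d)) = len (fst d)"
    and path: "is_path E' src' (hv v0) \<gamma> v0'"
    and marking: "\<forall>w\<in>carrier (FG n). m' w = reduce (inv_w \<gamma> @ map he (m w) @ \<gamma>)"
    using iso by (simp_all add: mg_iso_def)
  have c': "\<forall>d\<in>E' \<times> UNIV. he' (flip d) = flip (he' d) \<and> src (he' d) = inv_into V hv (src' d)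
      \<and> len (fst (he' d)) = len' (fst d)"
    using inv_into_edge_map[OF v hv he c] by (simp add: he'_def)
  have he': "bij_betw he' (E' \<times> UNIV) (E \<times> UNIV)" unfolding he'_def by (rule bij_betw_inv_into[OF he])
  have "is_path E src (inv_into V hv (hv v0)) (map he' \<gamma>) (inv_into V hv v0')"
    using c' bij_betw_imp_surj_on[OF he'] path by (intro is_path_map) auto
  moreover have "inv_into V hv (hv v0) = v0"
    using hv v by (simp add: bij_betw_def inv_into_f_f valid_mgraph_def)
  ultimately have path': "is_path E src (inv_into V hv v0') (inv_w (map he' \<gamma>)) v0"
    by (simp add: is_path_inv)
  have "m w = reduce (inv_w (inv_w (map he' \<gamma>)) @ map he' (m' w) @ inv_w (map he' \<gamma>))"
    if w: "w \<in> carrier (FG n)" for w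
  proof -
    have mw: "set (m w) \<subseteq> E \<times> UNIV" "reduced (m w)"
      using valid_mgraph_marking[OF v w] is_path_set by blast+
    have "set (map he (m w)) \<subseteq> E' \<times> UNIV"
      unfolding set_map using mw(1) bij_betwE[OF he] by blast
    moreover have "map he' (map he (m w)) = m w"
      using mw(1) he by (auto simp: he'_def bij_betw_def inv_into_f_f intro!: map_idI)
    moreover have "inj_on he' (E' \<times> UNIV)" using he' by (simp add: bij_betw_def)
    ultimately show ?thesis
      using reduce_conj_map_inverse[of he' "E' \<times> UNIV" \<gamma> "map he (m w)" "m w"] c' flip_mem_Times
        is_path_set[OF path] mw(2) marking w
      by simp
  qed
  then show ?thesis
    using bij_betw_inv_into[OF hv] he' c' path' by (simp add: mg_iso_def)
qed

lemma mg_refl: "valid_mgraph n g \<Longrightarrow> mg_equiv n g g"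
  by (cases g) (auto simp: mg_equiv_iff intro: mg_iso_same_graph)

lemma mg_sym: "mg_equiv n g g' \<Longrightarrow> mg_equiv n g' g"
  by (cases g; cases g') (auto simp: mg_equiv_iff dest: mg_iso_inverse)

lemma mg_trans: "mg_equiv n g g' \<Longrightarrow> mg_equiv n g' g'' \<Longrightarrow> mg_equiv n g g''"
  by (cases g; cases g'; cases g'') (auto simp: mg_equiv_iff dest: mg_iso_comp)

lemma mg_class_eq: "mg_equiv n g g' \<Longrightarrow> mg_class n g = mg_class n g'"
  unfolding mg_class_def using mg_sym mg_trans by blast

section \<open>The action of \<open>Out(F\<^sub>n)\<close> on outer space\<close>

lemma valid_precomp: "valid_mgraph n g \<Longrightarrow> \<Phi> \<in> Aut n \<Longrightarrow> valid_mgraph n (precomp g \<Phi>)"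
  by (cases g) (auto simp: valid_mgraph_def precomp_def Aut_def intro: iso_set_trans)

lemma mg_equiv_precomp:
  assumes "mg_equiv n g g'" "\<Phi> \<in> Aut n"
  shows "mg_equiv n (precomp g \<Phi>) (precomp g' \<Phi>)"
proof -
  have "mg_iso n (precomp g \<Phi>) (precomp g' \<Phi>) hv he \<gamma>" if "mg_iso n g g' hv he \<gamma>" for hv he \<gamma>
    using that Aut_carrier[OF assms(2)] by (cases g; cases g') (simp add: mg_iso_def precomp_def)
  then show ?thesis using assms valid_precomp by (meson mg_equiv_iff)
qed

lemma mg_equiv_precomp_cong:
  assumes "valid_mgraph n g" "\<Phi> \<in> Aut n" "\<And>w. w \<in> carrier (FG n) \<Longrightarrow> \<Phi> w = \<Psi> w"
  shows "mg_equiv n (precomp g \<Phi>) (precomp g \<Psi>)"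
proof (cases g)
  case (fields V E src len v0 m)
  then have "valid_mgraph n (V, E, src, len, v0, m \<circ> \<Phi>)"
    using valid_precomp[OF assms(1,2)] by (simp add: precomp_def)
  moreover from this have "valid_mgraph n (V, E, src, len, v0, m \<circ> \<Psi>)"
    by (rule valid_mgraph_cong) (simp add: assms(3))
  ultimately show ?thesis
    using mg_iso_same_graph[of n V E src len v0 "m \<circ> \<Phi>" "m \<circ> \<Psi>"] fields assms(3)
    by (auto simp: mg_equiv_iff precomp_def)
qed

text \<open>Inner automorphisms act trivially: conjugating the marking by the loop \<open>m h\<close> is undone by moving
  the base point around that loop.\<close>

lemma mg_equiv_precomp_out_class:
  assumes v: "valid_mgraph n g" and \<Phi>0: "\<Phi>0 \<in> Aut n" and \<Phi>: "\<Phi> \<in> out_class n \<Phi>0"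
  shows "mg_equiv n (precomp g \<Phi>0) (precomp g \<Phi>)"
proof (cases g)
  case (fields V E src len v0 m)
  obtain h where \<Phi>_Aut: "\<Phi> \<in> Aut n" and h: "h \<in> carrier (FG n)"
    and conj: "\<And>w. w \<in> carrier (FG n) \<Longrightarrow> \<Phi> w = h \<otimes>\<^bsub>FG n\<^esub> \<Phi>0 w \<otimes>\<^bsub>FG n\<^esub> inv\<^bsub>FG n\<^esub> h"
    using out_classE[OF \<Phi>] by metis
  have m: "m \<in> hom (FG n) (pi1 E src v0)" using v fields by (simp add: valid_mgraph_def iso_def)
  interpret m: group_hom "FG n" "pi1 E src v0" m
    using m by (simp add: group_hom_def group_hom_axioms_def group_free group_pi1)
  have mh: "m h \<in> carrier (pi1 E src v0)" using h by simp
  have "m (\<Phi> w) = reduce (inv_w (inv_w (m h)) @ map id (m (\<Phi>0 w)) @ inv_w (m h))"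
    if w: "w \<in> carrier (FG n)" for w
    using conj[OF w] h Aut_carrier[OF \<Phi>0 w] mh by (simp add: mult_pi1 inv_pi1)
  moreover have "is_path E src v0 (inv_w (m h)) v0" using mh is_path_inv by (simp add: carrier_pi1)
  ultimately have "mg_iso n (precomp g \<Phi>0) (precomp g \<Phi>) id id (inv_w (m h))"
    using fields by (simp add: mg_iso_def precomp_def)
  then show ?thesis using v valid_precomp \<Phi>0 \<Phi>_Aut mg_equiv_iff by blast
qed

lemma cv_act_out_class:
  assumes v: "valid_mgraph n g" and \<Phi>0: "\<Phi>0 \<in> Aut n"
  shows "cv_act n (mg_class n g) (out_class n \<Phi>0) = mg_class n (precomp g \<Phi>0)"
proof
  show "cv_act n (mg_class n g) (out_class n \<Phi>0) \<subseteq> mg_class n (precomp g \<Phi>0)"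
  proof
    fix g' assume "g' \<in> cv_act n (mg_class n g) (out_class n \<Phi>0)"
    then obtain g1 \<Phi> where g1: "mg_equiv n g g1" and \<Phi>: "\<Phi> \<in> out_class n \<Phi>0"
      and g': "mg_equiv n (precomp g1 \<Phi>) g'"
      by (auto simp: cv_act_def mg_class_def)
    have "\<Phi> \<in> Aut n" using \<Phi> by (simp add: out_class_def)
    then have "mg_equiv n (precomp g \<Phi>0) (precomp g1 \<Phi>)"
      using mg_equiv_precomp_out_class[OF v \<Phi>0 \<Phi>] mg_equiv_precomp[OF g1] mg_trans by blast
    then show "g' \<in> mg_class n (precomp g \<Phi>0)"
      using g' mg_trans unfolding mg_class_def by blast
  qed
  show "mg_class n (precomp g \<Phi>0) \<subseteq> cv_act n (mg_class n g) (out_class n \<Phi>0)"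
    unfolding cv_act_def mg_class_def using mg_refl[OF v] self_out_class[OF \<Phi>0] by blast
qed

definition cv_aut_act :: "nat \<Rightarrow> mgraph set \<Rightarrow> (word \<Rightarrow> word) \<Rightarrow> mgraph set" where
  "cv_aut_act n y \<Phi> = cv_act n y (out_class n \<Phi>)"

lemma orbit_action_cv_aut_act:
  assumes x: "x \<in> CV n"
  shows "orbit_action (AG n) (cv_aut_act n) x"
proof -
  obtain g where v: "valid_mgraph n g" and x: "x = mg_class n g" using x by (auto simp: CV_def)
  interpret G: group "AG n" by (rule group_AG)
  have act: "cv_aut_act n x a = mg_class n (precomp g a)" if "a \<in> auto (FG n)" for a
    unfolding cv_aut_act_def x by (rule cv_act_out_class[OF v auto_Aut[OF that]])
  show ?thesis
  proof unfold_locales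
    have "mg_equiv n (precomp g \<one>\<^bsub>AG n\<^esub>) (precomp g id)"
      using G.one_closed carrier_AG auto_Aut by (intro mg_equiv_precomp_cong[OF v]) (auto simp: one_AG)
    moreover have "precomp g id = g" by (cases g) (simp add: precomp_def)
    ultimately show "cv_aut_act n x \<one>\<^bsub>AG n\<^esub> = x"
      using act[of "\<one>\<^bsub>AG n\<^esub>"] G.one_closed carrier_AG mg_class_eq x by metis
  next
    fix a b assume a: "a \<in> carrier (AG n)" and b: "b \<in> carrier (AG n)"
    then have a': "a \<in> Aut n" and b': "b \<in> Aut n" and ab: "a \<otimes>\<^bsub>AG n\<^esub> b \<in> auto (FG n)"
      using G.m_closed carrier_AG auto_Aut by auto
    have "precomp (precomp g a) b = precomp g (a \<circ> b)" by (cases g) (simp add: precomp_def comp_assoc)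
    moreover have "a \<circ> b \<in> Aut n" using a' b' by (simp add: Aut_def iso_set_trans)
    then have "mg_equiv n (precomp g (a \<circ> b)) (precomp g (a \<otimes>\<^bsub>AG n\<^esub> b))"
      using a b by (intro mg_equiv_precomp_cong[OF v]) (simp_all add: carrier_AG mult_AG compose_def)
    ultimately have "mg_class n (precomp (precomp g a) b) = cv_aut_act n x (a \<otimes>\<^bsub>AG n\<^esub> b)"
      using act[OF ab] mg_class_eq by simp
    moreover have "cv_aut_act n (cv_aut_act n x a) b = mg_class n (precomp (precomp g a) b)"
      using act a b carrier_AG cv_act_out_class[OF valid_precomp[OF v a'] b']
      by (simp add: cv_aut_act_def)
    ultimately show "cv_aut_act n (cv_aut_act n x a) b = cv_aut_act n x (a \<otimes>\<^bsub>AG n\<^esub> b)" by simp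
  qed
qed

lemma orbit_action_hom_aut_act:
  assumes "f0 \<in> extensional (carrier (FG n))"
  shows "orbit_action (AG n) (\<lambda>f \<Phi>. hom_aut_act n \<Phi> f) f0"
proof -
  interpret G: group "AG n" by (rule group_AG)
  show ?thesis
    by unfold_locales (simp_all add: hom_aut_act_one[OF assms] hom_aut_act_mult carrier_AG)
qed

section \<open>Counting orbits\<close>

lemma stab_eq_out_class_image:
  assumes "x \<in> CV n"
  shows "stab n x = out_class n ` orbit_action.stabiliser (AG n) (cv_aut_act n) x"
  unfolding orbit_action.stabiliser_def[OF orbit_action_cv_aut_act[OF assms]]
  by (auto simp: stab_def Out_eq_auto_image carrier_AG cv_aut_act_def)

lemma hom_stabiliser_eq_out_class_image:
  assumes "f \<in> hom (FG n) (ZP p)" "f \<in> extensional (carrier (FG n))"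
  shows "{\<phi> \<in> Out n. hom_act n \<phi> f = f}
    = out_class n ` orbit_action.stabiliser (AG n) (\<lambda>f \<Phi>. hom_aut_act n \<Phi> f) f"
  unfolding orbit_action.stabiliser_def[OF orbit_action_hom_aut_act[OF assms(2)]]
  by (auto simp: Out_eq_auto_image carrier_AG hom_act_out_class[OF assms(1)])

lemma nontriv_homs_eq_orbit:
  assumes "Factorial_Ring.prime p" "n \<ge> 2" "f0 \<in> nontriv_homs n p"
  shows "nontriv_homs n p = (\<lambda>\<Phi>. hom_aut_act n \<Phi> f0) ` carrier (AG n)"
  using nontriv_homs_aut_related[OF assms] hom_aut_act_nontriv_homs[OF assms(3)]
  by (auto simp: aut_related_def carrier_AG)

theorem bij_CV_orbits_hom_orbits:
  assumes "Factorial_Ring.prime p" "n \<ge> 2" "x \<in> CV n" "f0 \<in> nontriv_homs n p"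
  shows "\<exists>h. bij_betw h ((\<lambda>y. cv_act n y ` {\<phi> \<in> Out n. hom_act n \<phi> f0 = f0}) ` (cv_act n x ` Out n))
    ((\<lambda>f. (\<lambda>\<phi>. hom_act n \<phi> f) ` stab n x) ` nontriv_homs n p)"
proof -
  let ?X = "orbit_action.stabiliser (AG n) (cv_aut_act n) x"
  have f0: "f0 \<in> hom (FG n) (ZP p)" "f0 \<in> extensional (carrier (FG n))"
    using assms(4) by (simp_all add: nontriv_homs_def)
  have "?X \<subseteq> carrier (AG n)"
    using orbit_action.stabiliser_def[OF orbit_action_cv_aut_act[OF assms(3)]] by auto
  then have "(\<lambda>\<phi>. hom_act n \<phi> f) ` stab n x = (\<lambda>\<Phi>. hom_aut_act n \<Phi> f) ` ?X"
    if "f \<in> nontriv_homs n p" for f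
    unfolding stab_eq_out_class_image[OF assms(3)] image_image
    using that hom_act_out_class[of f n p] by (intro image_cong) (auto simp: nontriv_homs_def carrier_AG)
  moreover have "cv_act n x ` Out n = cv_aut_act n x ` carrier (AG n)"
    by (auto simp: Out_eq_auto_image carrier_AG cv_aut_act_def)
  ultimately show ?thesis
    using double_coset_duality[OF orbit_action_cv_aut_act[OF assms(3)] orbit_action_hom_aut_act[OF f0(2)]]
    unfolding hom_stabiliser_eq_out_class_image[OF f0] nontriv_homs_eq_orbit[OF assms(1,2,4)]
    by (simp add: image_image cv_aut_act_def cong: image_cong)
qed

lemma pair_orbits_eq_image_hom_orbits:
  assumes "Factorial_Ring.prime p" "H \<subseteq> Out n"
  shows "(\<lambda>P. (\<lambda>\<phi>. pair_act n \<phi> P) ` H) ` index_p_pairs n p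
    = image (fibre_pair n) ` (\<lambda>f. (\<lambda>\<phi>. hom_act n \<phi> f) ` H) ` nontriv_homs n p"
  unfolding fibre_pair_image[OF assms(1), symmetric] image_image
  using pair_act_fibre_pair assms(2) by (intro image_cong refl) (auto simp: image_image)

lemma inj_on_image_fibre_pair:
  assumes "Factorial_Ring.prime p" "H \<subseteq> Out n"
  shows "inj_on (image (fibre_pair n)) ((\<lambda>f. (\<lambda>\<phi>. hom_act n \<phi> f) ` H) ` nontriv_homs n p)"
proof (rule inj_on_subset[OF inj_on_image_Pow[OF inj_on_fibre_pair[OF assms(1)]]])
  show "(\<lambda>f. (\<lambda>\<phi>. hom_act n \<phi> f) ` H) ` nontriv_homs n p \<subseteq> Pow (nontriv_homs n p)"
    using hom_act_nontriv_homs assms(2) by blast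
qed

lemma exists_nontriv_hom_kernel:
  assumes p: "Factorial_Ring.prime p" and N: "N \<lhd> FG n" "card (rcosets\<^bsub>FG n\<^esub> N) = p"
  obtains f where "f \<in> nontriv_homs n p" "N = {w \<in> carrier (FG n). f w = 0}"
proof -
  interpret N: normal N "FG n" by (rule N(1))
  have "\<exists>C\<in>rcosets\<^bsub>FG n\<^esub> N. C \<noteq> N"
  proof (rule ccontr)
    assume "\<not> ?thesis"
    then have "card (rcosets\<^bsub>FG n\<^esub> N) \<le> card {N}" by (intro card_mono) auto
    then show False using N(2) prime_gt_1_nat[OF p] by simp
  qed
  then obtain C where "C \<in> rcosets\<^bsub>FG n\<^esub> N" "C \<noteq> N" by blast
  then have "(N, C) \<in> index_p_pairs n p" using N by (simp add: index_p_pairs_def)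
  then show ?thesis using fibre_pair_surj[OF p] that by (auto simp: fibre_pair_def)
qed

theorem lemma6p6:
  fixes n p :: nat and x :: "mgraph set" and N :: "word set"
  assumes "n \<ge> 2" and "Factorial_Ring.prime p" and "x \<in> CV n"
    and "N \<lhd> free_group n" and "card (rcosets\<^bsub>free_group n\<^esub> N) = p"
  defines "A \<equiv> coset_stab n N"
  defines "SA \<equiv> (\<lambda>y. cv_act n y ` A) ` (cv_act n x ` Out n)"
    and "SB \<equiv> (\<lambda>P. (\<lambda>\<phi>. pair_act n \<phi> P) ` stab n x) ` index_p_pairs n p"
    and "SC \<equiv> (\<lambda>f. (\<lambda>\<phi>. hom_act n \<phi> f) ` stab n x) ` nontriv_homs n p"
  shows "finite SA \<and> finite SB \<and> finite SC \<and> card SA = card SB \<and> card SB = card SC"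
proof -
  obtain f0 where f0: "f0 \<in> nontriv_homs n p" "N = {w \<in> carrier (FG n). f0 w = 0}"
    using exists_nontriv_hom_kernel[OF assms(2,4,5)] .
  have "A = {\<phi> \<in> Out n. hom_act n \<phi> f0 = f0}"
    unfolding A_def using f0 by (intro coset_stab_eq_hom_stabiliser[where p = p]) (simp_all add: nontriv_homs_def)
  then obtain h where h: "bij_betw h SA SC"
    using bij_CV_orbits_hom_orbits[OF assms(2,1,3) f0(1)] unfolding SA_def SC_def by blast
  have stab: "stab n x \<subseteq> Out n" by (simp add: stab_def)
  have finite_SC: "finite SC"
    unfolding SC_def using finite_nontriv_homs assms(2) prime_gt_0_nat by blast
  have SB: "SB = image (fibre_pair n) ` SC"
    unfolding SB_def SC_def by (rule pair_orbits_eq_image_hom_orbits[OF assms(2) stab])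
  have "card SB = card SC"
    unfolding SB SC_def by (rule card_image[OF inj_on_image_fibre_pair[OF assms(2) stab]])
  then show ?thesis
    using finite_SC bij_betw_finite[OF h] bij_betw_same_card[OF h] SB by simp
qed

end
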